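(* Let $q$ be a prime power, let $n$ be a positive even integer, let $\lambda \in \mathbb{F}_{q^n} \setminus \mathbb{F}_{q^2}$, let $t = [\mathbb{F}_{q^2}(\lambda) : \mathbb{F}_{q^2}]$, let $l$ be an integer with $1 \leq l < \frac{t}{2}$, and let $Y = \langle 1, \lambda, \ldots, \lambda^l \rangle_{\mathbb{F}_{q^2}}$. Let $S$ be the $\mathbb{F}_q$-subspace of $Y$ given by \[ S = \langle 1, \lambda, \ldots, \lambda^{l-1} \rangle_{\mathbb{F}_{q^2}} \oplus \lambda^l \mathbb{F}_q \in \mathcal{G}_q(n, 2l + 1), \] and let $\mathcal{C}=\mathrm{Orb}(S)$. Then the weight distribution of $\mathcal{C}$ satisfies \[ \omega_{2i} = \begin{cases} q, & \text{if } i = 1, \\ q^{4r-1}(q^2 - 1), & \text{if } i = 2r + 1,\ r \in \{1, \ldots, l - 1\}, \\ q^{4r-2}(q+1)^2, & \text{if } i = 2r,\ r \in \{1, \ldots, l\}, \\ \frac{q^n-1}{q-1}-(q+1)-(q+1)q^2\frac{(q^{4l-3}-q)(q-1)+(q+1)(q^{4l}-1)}{q^4-1}, & \text{if } i=2l+1. \end{cases} \]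
   Context: $\mathbb{F}_{q^n}$ is viewed as an $n$-dimensional $\mathbb{F}_q$-vector space. $\mathcal{G}_q(n,k)$ denotes the set of all $k$-dimensional $\mathbb{F}_q$-subspaces of $\mathbb{F}_{q^n}$, with subspace distance $d(U,V) = 2k - 2\dim_{\mathbb{F}_q}(U \cap V)$. For an $\mathbb{F}_q$-subspace $S$, $\mathrm{Orb}(S) = \{\alpha S : \alpha \in \mathbb{F}_{q^n}^*\}$ (a one-orbit cyclic subspace code). If $\dim_{\mathbb{F}_q} S = k$, the weight distribution of $\mathcal{C}=\mathrm{Orb}(S)$ is $(\omega_2(\mathcal{C}),\ldots,\omega_{2k}(\mathcal{C}))$ where $\omega_{2i}(\mathcal{C}) = |\{\alpha S \in \mathrm{Orb}(S) : \alpha \in \mathbb{F}_{q^n}^*,\ d(S,\alpha S) = 2i\}|$ (counting distinct subspaces $\alpha S$). *)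

theory Defs
  imports "HOL-Computational_Algebra.Primes" Complex_Main
begin

text \<open>The ambient field F_{q^n} is a finite type 'a of class field; subfields
  (such as F_q, F_{q^2}) are subsets closed under the field operations.\<close>

definition subfield_of :: "'a::field set \<Rightarrow> bool" where
  "subfield_of K \<longleftrightarrow> 0 \<in> K \<and> 1 \<in> K \<and>
     (\<forall>x\<in>K. \<forall>y\<in>K. x + y \<in> K \<and> x * y \<in> K) \<and>
     (\<forall>x\<in>K. - x \<in> K) \<and> (\<forall>x\<in>K. x \<noteq> 0 \<longrightarrow> inverse x \<in> K)"

definition span_over :: "'a::field set \<Rightarrow> 'a set \<Rightarrow> 'a set" where
  "span_over K B = {\<Sum>b\<in>B. c b * b | c. \<forall>b\<in>B. c b \<in> K}"

definition dim_over :: "'a::field set \<Rightarrow> 'a set \<Rightarrow> nat" where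
  "dim_over K W = (LEAST m. \<exists>B. finite B \<and> card B = m \<and> B \<subseteq> W \<and> span_over K B = W)"

definition adjoin :: "'a::field set \<Rightarrow> 'a \<Rightarrow> 'a set" where
  "adjoin K x = \<Inter>{F. subfield_of F \<and> K \<subseteq> F \<and> x \<in> F}"

text \<open>Subspace distance over K, for subspaces U V of dimension k = dim U.\<close>
definition subspace_dist :: "'a::field set \<Rightarrow> 'a set \<Rightarrow> 'a set \<Rightarrow> nat" where
  "subspace_dist K U V = 2 * dim_over K U - 2 * dim_over K (U \<inter> V)"

definition orb :: "'a::field set \<Rightarrow> 'a set set" where
  "orb S = {(\<lambda>x. a * x) ` S | a. a \<noteq> 0}"

definition weight :: "'a::field set \<Rightarrow> 'a set \<Rightarrow> nat \<Rightarrow> nat" where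
  "weight K S i = card {V \<in> orb S. subspace_dist K S V = 2 * i}"

end

(* Write S as the values at lam of the polynomials of degree at most l over F_{q^2} whose
   coefficient of x^l lies in F_q.  Since [F_{q^2}(lam) : F_{q^2}] > 2l, evaluation at lam is
   injective on polynomials of degree at most 2l, so a relation u(lam) = alpha v(lam) between
   such polynomials is the polynomial identity u g = f v, where (f, g) is a pair of minimal
   degree D(alpha) with f(lam) = alpha g(lam); hence (u, v) = (f h, g h).  Consequently
   S /\ alpha S consists of the values (f h)(lam) with deg h <= l - D(alpha) and constrained top
   coefficient, and its dimension is 2 (l - D(alpha)) + eps(alpha), where eps(alpha) records
   whether the leading coefficients of f and g are F_q-proportional.  Counting the pairs of
   polynomials of degree at most k with prescribed leading coefficients once by the ratio
   they realise and once directly gives a triangular system for the number of alpha with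
   given D and eps.  Finally the stabiliser of S is F_q^*, so every subspace of the orbit
   arises from exactly q - 1 scalars. *)

theory Submission
  imports Defs "HOL-Computational_Algebra.Polynomial" "HOL-Library.FuncSet"
begin

section \<open>Subfields and subspaces of a finite field\<close>

lemma subfield_zero: "subfield_of K \<Longrightarrow> 0 \<in> K"
  unfolding subfield_of_def by auto

lemma subfield_one: "subfield_of K \<Longrightarrow> 1 \<in> K"
  unfolding subfield_of_def by auto

lemma subfield_add: "subfield_of K \<Longrightarrow> x \<in> K \<Longrightarrow> y \<in> K \<Longrightarrow> x + y \<in> K"
  unfolding subfield_of_def by auto

lemma subfield_mult: "subfield_of K \<Longrightarrow> x \<in> K \<Longrightarrow> y \<in> K \<Longrightarrow> x * y \<in> K"
  unfolding subfield_of_def by auto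

lemma subfield_uminus: "subfield_of K \<Longrightarrow> x \<in> K \<Longrightarrow> - x \<in> K"
  unfolding subfield_of_def by auto

lemma subfield_inverse: "subfield_of K \<Longrightarrow> x \<in> K \<Longrightarrow> inverse x \<in> K"
  unfolding subfield_of_def by (cases "x = 0") auto

lemma subfield_diff: "subfield_of K \<Longrightarrow> x \<in> K \<Longrightarrow> y \<in> K \<Longrightarrow> x - y \<in> K"
  by (metis diff_conv_add_uminus subfield_add subfield_uminus)

lemma subfield_divide: "subfield_of K \<Longrightarrow> x \<in> K \<Longrightarrow> y \<in> K \<Longrightarrow> x / y \<in> K"
  by (simp add: divide_inverse subfield_inverse subfield_mult)

lemma subfield_sum: "subfield_of K \<Longrightarrow> (\<And>x. x \<in> A \<Longrightarrow> f x \<in> K) \<Longrightarrow> sum f A \<in> K"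
  by (induction A rule: infinite_finite_induct) (auto simp: subfield_zero subfield_add)

lemma card_subfield_ge_2: "subfield_of K \<Longrightarrow> finite K \<Longrightarrow> card K \<ge> 2"
  using card_mono[of K "{0, 1}"] by (simp add: subfield_zero subfield_one)

lemma card_subfield_minus_zero: "subfield_of K \<Longrightarrow> card (K - {0}) = card K - 1"
  by (simp add: subfield_zero)

text \<open>Multiplication by a nonzero element permutes a finite subring, so it hits \<open>1\<close>.\<close>

lemma finite_subring_is_subfield:
  fixes Z :: "'a::{field,finite} set"
  assumes "0 \<in> Z" "1 \<in> Z" "\<And>x y. x \<in> Z \<Longrightarrow> y \<in> Z \<Longrightarrow> x + y \<in> Z"
    "\<And>x y. x \<in> Z \<Longrightarrow> y \<in> Z \<Longrightarrow> x * y \<in> Z" "\<And>x. x \<in> Z \<Longrightarrow> - x \<in> Z"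
  shows "subfield_of Z"
  unfolding subfield_of_def
proof (intro conjI ballI impI)
  fix x assume x: "x \<in> Z" "x \<noteq> 0"
  have "(\<lambda>y. x * y) ` Z \<subseteq> Z" using assms(4) x by auto
  moreover have "card ((\<lambda>y. x * y) ` Z) = card Z" by (rule card_image) (use x in \<open>auto intro: inj_onI\<close>)
  ultimately have "(\<lambda>y. x * y) ` Z = Z" by (simp add: card_subset_eq)
  then obtain y where "y \<in> Z" "x * y = 1" using assms(2) by (metis imageE)
  then show "inverse x \<in> Z" by (metis inverse_unique)
qed (use assms in auto)

definition subspace_over :: "'a::field set \<Rightarrow> 'a set \<Rightarrow> bool" where
  "subspace_over K W \<longleftrightarrow> 0 \<in> W \<and> (\<forall>x\<in>W. \<forall>y\<in>W. x + y \<in> W) \<and> (\<forall>c\<in>K. \<forall>x\<in>W. c * x \<in> W)"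

lemma subspace_over_sum: "subspace_over K W \<Longrightarrow> (\<And>x. x \<in> A \<Longrightarrow> f x \<in> W) \<Longrightarrow> sum f A \<in> W"
  unfolding subspace_over_def by (induction A rule: infinite_finite_induct) auto

lemma subspace_over_diff:
  "subfield_of K \<Longrightarrow> subspace_over K W \<Longrightarrow> x \<in> W \<Longrightarrow> y \<in> W \<Longrightarrow> x - y \<in> W"
  unfolding subspace_over_def
  by (metis diff_conv_add_uminus mult_minus1 subfield_one subfield_uminus)

lemma subspace_over_Int: "subspace_over K V \<Longrightarrow> subspace_over K W \<Longrightarrow> subspace_over K (V \<inter> W)"
  unfolding subspace_over_def by auto

lemma subspace_over_scaled:
  assumes W: "subspace_over K W" shows "subspace_over K ((\<lambda>x. a * x) ` W)"
  unfolding subspace_over_def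
proof (intro conjI ballI)
  show "0 \<in> (\<lambda>x. a * x) ` W" using W unfolding subspace_over_def by (metis image_eqI mult_zero_right)
next
  fix x y assume "x \<in> (\<lambda>x. a * x) ` W" "y \<in> (\<lambda>x. a * x) ` W"
  then obtain u v where "u \<in> W" "v \<in> W" "x = a * u" "y = a * v" by blast
  then show "x + y \<in> (\<lambda>x. a * x) ` W"
    using W unfolding subspace_over_def by (intro image_eqI[of _ _ "u + v"]) (auto simp: distrib_left)
next
  fix c x assume "c \<in> K" "x \<in> (\<lambda>x. a * x) ` W"
  then obtain u where "u \<in> W" "x = a * u" by blast
  then show "c * x \<in> (\<lambda>x. a * x) ` W"
    using W \<open>c \<in> K\<close> unfolding subspace_over_def by (intro image_eqI[of _ _ "c * u"]) (auto simp: mult.left_commute)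
qed

lemma subspace_over_adjoin: "subfield_of L \<Longrightarrow> subspace_over L (adjoin L x)"
  unfolding subspace_over_def adjoin_def subfield_of_def by blast

lemma subspace_over_span: "subfield_of K \<Longrightarrow> subspace_over K (span_over K B)"
  unfolding subspace_over_def span_over_def
proof (intro conjI ballI)
  assume K: "subfield_of K"
  show "0 \<in> {\<Sum>b\<in>B. c b * b |c. \<forall>b\<in>B. c b \<in> K}"
    using K by (intro CollectI exI[of _ "\<lambda>_. 0"]) (simp add: subfield_zero)
  fix x y assume "x \<in> {\<Sum>b\<in>B. c b * b |c. \<forall>b\<in>B. c b \<in> K}" "y \<in> {\<Sum>b\<in>B. c b * b |c. \<forall>b\<in>B. c b \<in> K}"
  then obtain c d where "x = (\<Sum>b\<in>B. c b * b)" "\<forall>b\<in>B. c b \<in> K" "y = (\<Sum>b\<in>B. d b * b)" "\<forall>b\<in>B. d b \<in> K"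
    by auto
  then show "x + y \<in> {\<Sum>b\<in>B. c b * b |c. \<forall>b\<in>B. c b \<in> K}"
    using K by (intro CollectI exI[of _ "\<lambda>b. c b + d b"]) (auto simp: sum.distrib distrib_right subfield_add)
next
  assume K: "subfield_of K"
  fix k x assume "k \<in> K" "x \<in> {\<Sum>b\<in>B. c b * b |c. \<forall>b\<in>B. c b \<in> K}"
  then obtain c where "x = (\<Sum>b\<in>B. c b * b)" "\<forall>b\<in>B. c b \<in> K" by auto
  then show "k * x \<in> {\<Sum>b\<in>B. c b * b |c. \<forall>b\<in>B. c b \<in> K}" using \<open>k \<in> K\<close> K
    by (intro CollectI exI[of _ "\<lambda>b. k * c b"]) (auto simp: sum_distrib_left mult.assoc subfield_mult)
qed

lemma span_over_least:
  assumes "subspace_over K W" "B \<subseteq> W" shows "span_over K B \<subseteq> W"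
proof
  fix x assume "x \<in> span_over K B"
  then obtain c where "x = (\<Sum>b\<in>B. c b * b)" "\<forall>b\<in>B. c b \<in> K" unfolding span_over_def by auto
  then show "x \<in> W" using assms by (auto intro!: subspace_over_sum[OF assms(1)] simp: subspace_over_def)
qed

lemma span_over_superset:
  assumes "subfield_of K" "finite B" "b \<in> B" shows "b \<in> span_over K B"
  unfolding span_over_def
proof (intro CollectI exI[of _ "\<lambda>x. if x = b then 1 else 0"] conjI)
  have "(\<Sum>x\<in>B. (if x = b then 1 else 0) * x) = (\<Sum>x\<in>B. if x = b then x else 0)"
    by (rule sum.cong) auto
  then show "b = (\<Sum>x\<in>B. (if x = b then 1 else 0) * x)" using assms by simp
qed (use assms in \<open>auto simp: subfield_zero subfield_one\<close>)

lemma card_span_over_le: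
  assumes "finite B" "finite K" shows "card (span_over K B) \<le> card K ^ card B"
proof -
  have "span_over K B \<subseteq> (\<lambda>c. \<Sum>b\<in>B. c b * b) ` (B \<rightarrow>\<^sub>E K)"
  proof
    fix x assume "x \<in> span_over K B"
    then obtain c where c: "x = (\<Sum>b\<in>B. c b * b)" "\<forall>b\<in>B. c b \<in> K" unfolding span_over_def by auto
    then have "x = (\<Sum>b\<in>B. restrict c B b * b)" "restrict c B \<in> B \<rightarrow>\<^sub>E K" by auto
    then show "x \<in> (\<lambda>c. \<Sum>b\<in>B. c b * b) ` (B \<rightarrow>\<^sub>E K)" by blast
  qed
  then have "card (span_over K B) \<le> card ((\<lambda>c. \<Sum>b\<in>B. c b * b) ` (B \<rightarrow>\<^sub>E K))"
    by (intro card_mono finite_imageI finite_PiE) (use assms in auto)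
  also have "\<dots> \<le> card (B \<rightarrow>\<^sub>E K)" by (intro card_image_le finite_PiE) (use assms in auto)
  also have "\<dots> = card K ^ card B" using assms by (simp add: card_PiE)
  finally show ?thesis .
qed

lemma span_over_insert:
  assumes "finite B" "w \<notin> B"
  shows "span_over K (insert w B) = (\<lambda>(s, c). s + c * w) ` (span_over K B \<times> K)"
proof
  show "span_over K (insert w B) \<subseteq> (\<lambda>(s, c). s + c * w) ` (span_over K B \<times> K)"
  proof
    fix x assume "x \<in> span_over K (insert w B)"
    then obtain c where c: "x = (\<Sum>b\<in>insert w B. c b * b)" "\<forall>b\<in>insert w B. c b \<in> K"
      unfolding span_over_def by auto
    have "x = (\<Sum>b\<in>B. c b * b) + c w * w" using c assms by (simp add: add.commute)
    moreover have "(\<Sum>b\<in>B. c b * b) \<in> span_over K B" using c unfolding span_over_def by auto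
    ultimately show "x \<in> (\<lambda>(s, c). s + c * w) ` (span_over K B \<times> K)" using c by auto
  qed
next
  show "(\<lambda>(s, c). s + c * w) ` (span_over K B \<times> K) \<subseteq> span_over K (insert w B)"
  proof clarify
    fix s a assume sa: "s \<in> span_over K B" "a \<in> K"
    then obtain c where c: "s = (\<Sum>b\<in>B. c b * b)" "\<forall>b\<in>B. c b \<in> K" unfolding span_over_def by auto
    have "(\<Sum>b\<in>B. (c(w := a)) b * b) = (\<Sum>b\<in>B. c b * b)"
      by (rule sum.cong) (use assms in auto)
    then have "s + a * w = (\<Sum>b\<in>insert w B. (c(w := a)) b * b)" using assms c by (simp add: add.commute)
    moreover have "\<forall>b\<in>insert w B. (c(w := a)) b \<in> K" using c sa by auto
    ultimately show "s + a * w \<in> span_over K (insert w B)" unfolding span_over_def by blast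
  qed
qed

lemma card_span_over_insert:
  fixes K :: "'a::{field,finite} set"
  assumes K: "subfield_of K" and B: "finite B" and w: "w \<notin> span_over K B"
  shows "card (span_over K (insert w B)) = card K * card (span_over K B)"
proof -
  have wB: "w \<notin> B" using span_over_superset[OF K B] w by blast
  have "inj_on (\<lambda>(s, c). s + c * w) (span_over K B \<times> K)"
  proof (rule inj_onI, clarsimp)
    fix s c s' c' assume h: "s \<in> span_over K B" "c \<in> K" "s' \<in> span_over K B" "c' \<in> K"
      "s + c * w = s' + c' * w"
    show "s = s' \<and> c = c'"
    proof (cases "c = c'")
      case False
      then have "w = inverse (c - c') * (s' - s)" using h(5) by (simp add: field_simps)
      moreover have "s' - s \<in> span_over K B" by (rule subspace_over_diff[OF K subspace_over_span[OF K] h(3,1)])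
      moreover have "inverse (c - c') \<in> K" using h K by (simp add: subfield_diff subfield_inverse)
      ultimately have "w \<in> span_over K B" using subspace_over_span[OF K] unfolding subspace_over_def by metis
      then show ?thesis using w by simp
    qed (use h in simp)
  qed
  then show ?thesis by (simp add: span_over_insert[OF B wB] card_image card_cartesian_product)
qed

text \<open>Greedy extension: a vector outside the current span multiplies its size by \<open>|K|\<close>.\<close>

lemma subspace_over_basis:
  fixes K :: "'a::{field,finite} set"
  assumes K: "subfield_of K" and W: "subspace_over K W"
  shows "\<exists>B. B \<subseteq> W \<and> span_over K B = W \<and> card W = card K ^ card B"
proof -
  have extend: "\<exists>B. B \<subseteq> W \<and> span_over K B = W \<and> card W = card K ^ card B"
    if "B0 \<subseteq> W" "card (span_over K B0) = card K ^ card B0" for B0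
    using that
  proof (induction "card W - card (span_over K B0)" arbitrary: B0 rule: less_induct)
    case (less B)
    have sub: "span_over K B \<subseteq> W" by (rule span_over_least[OF W less.prems(1)])
    show ?case
    proof (cases "span_over K B = W")
      case True
      then show ?thesis using less.prems by blast
    next
      case False
      then obtain w where w: "w \<in> W" "w \<notin> span_over K B" using sub by blast
      have wB: "w \<notin> B" using span_over_superset[OF K finite] w(2) by blast
      have card_ins: "card (span_over K (insert w B)) = card K ^ card (insert w B)"
        using card_span_over_insert[OF K _ w(2)] less.prems(2) wB by simp
      have sub': "span_over K (insert w B) \<subseteq> W"
        by (rule span_over_least[OF W]) (use less.prems w in auto)
      have "span_over K B \<subseteq> span_over K (insert w B)"
        by (rule span_over_least[OF subspace_over_span[OF K]]) (auto intro: span_over_superset[OF K])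
      moreover have "w \<in> span_over K (insert w B)" by (rule span_over_superset[OF K]) auto
      ultimately have "card (span_over K B) < card (span_over K (insert w B))"
        using w(2) by (intro psubset_card_mono) auto
      moreover have "card (span_over K (insert w B)) \<le> card W" using sub' by (simp add: card_mono)
      ultimately have "card W - card (span_over K (insert w B)) < card W - card (span_over K B)"
        by linarith
      then show ?thesis using less.hyps[OF _ _ card_ins] less.prems(1) w(1) by blast
    qed
  qed
  have "span_over K {} = {0}" unfolding span_over_def by auto
  then show ?thesis using extend[of "{}"] by simp
qed

lemma dim_over_eqI_card:
  fixes K :: "'a::{field,finite} set"
  assumes K: "subfield_of K" and W: "subspace_over K W" and c: "card W = card K ^ m"
  shows "dim_over K W = m"
proof -
  have q2: "card K \<ge> 2" using card_subfield_ge_2[OF K] by simp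
  obtain B0 where B0: "B0 \<subseteq> W" "span_over K B0 = W" "card W = card K ^ card B0"
    using subspace_over_basis[OF K W] by blast
  have m: "card B0 = m" using B0(3) c q2 by (simp add: power_inject_exp)
  show ?thesis unfolding dim_over_def
  proof (rule Least_equality)
    show "\<exists>B. finite B \<and> card B = m \<and> B \<subseteq> W \<and> span_over K B = W" using B0 m finite by blast
  next
    fix y assume "\<exists>B. finite B \<and> card B = y \<and> B \<subseteq> W \<and> span_over K B = W"
    then obtain B where B: "finite B" "card B = y" "span_over K B = W" by blast
    have "card K ^ m \<le> card K ^ y" using card_span_over_le[of B K] B c by simp
    then show "m \<le> y" using q2 by (simp add: power_le_imp_le_exp)
  qed
qed

lemma card_subspace_over:
  fixes K :: "'a::{field,finite} set"
  assumes K: "subfield_of K" and W: "subspace_over K W"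
  shows "card W = card K ^ dim_over K W"
proof -
  obtain B :: "'a set" where "card W = card K ^ card B" using subspace_over_basis[OF K W] by blast
  then show ?thesis using dim_over_eqI_card[OF K W] by simp
qed

section \<open>Polynomials over a subfield\<close>

definition poly_over :: "'a::zero set \<Rightarrow> 'a poly \<Rightarrow> bool" where
  "poly_over K p \<longleftrightarrow> (\<forall>i. coeff p i \<in> K)"

lemma poly_eq_sum_lessThan:
  fixes x :: "'a::comm_semiring_1"
  assumes "degree p < m" shows "poly p x = (\<Sum>j<m. coeff p j * x ^ j)"
  unfolding poly_altdef by (rule sum.mono_neutral_left) (use assms in \<open>auto simp: coeff_eq_0\<close>)

lemma coeff_mult_at_degree_bounds:
  fixes f h :: "'a::comm_semiring_1 poly"
  assumes "degree f \<le> d" "degree h \<le> e"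
  shows "coeff (f * h) (d + e) = coeff f d * coeff h e"
proof -
  have "coeff (f * h) (d + e) = (\<Sum>i\<le>d + e. if i = d then coeff f d * coeff h e else 0)"
    unfolding coeff_mult
  proof (rule sum.cong)
    fix i assume "i \<in> {..d + e}"
    show "coeff f i * coeff h (d + e - i) = (if i = d then coeff f d * coeff h e else 0)"
    proof (cases "i = d")
      case False
      then have "i > d \<or> d + e - i > e" by auto
      then show ?thesis using assms False by (auto simp: coeff_eq_0)
    qed simp
  qed simp
  then show ?thesis by simp
qed

lemma degree_le_of_cross_mult:
  fixes s t f g :: "'a::idom poly"
  assumes "s * g = f * t" "s \<noteq> 0" "f \<noteq> 0" "g \<noteq> 0" "degree g \<le> degree f"
  shows "degree t \<le> degree s"
proof -
  have "t \<noteq> 0" using assms(1-4) by auto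
  then have "degree s + degree g = degree f + degree t"
    using arg_cong[OF assms(1), of degree] assms(2-4) by (simp add: degree_mult_eq)
  then show ?thesis using assms(5) by linarith
qed

lemma finite_degree_le: "finite {p :: 'a::{zero,finite} poly. degree p \<le> m}"
proof -
  have "{p. degree p \<le> m} \<subseteq> Poly ` {xs :: 'a list. set xs \<subseteq> UNIV \<and> length xs \<le> Suc m}"
  proof
    fix p :: "'a poly" assume "p \<in> {p. degree p \<le> m}"
    then have "length (coeffs p) \<le> Suc m" by (cases "p = 0") (simp_all add: length_coeffs_degree)
    then show "p \<in> Poly ` {xs. set xs \<subseteq> UNIV \<and> length xs \<le> Suc m}"
      by (intro image_eqI[of _ _ "coeffs p"]) simp_all
  qed
  then show ?thesis by (rule finite_subset) (intro finite_imageI finite_lists_length_le; simp)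
qed

lemma card_poly_over_coeff_in:
  fixes L :: "'a::{field,finite} set"
  assumes L: "subfield_of L" and C: "C \<subseteq> L"
  shows "card {h. poly_over L h \<and> degree h \<le> m \<and> coeff h m \<in> C} = card L ^ m * card C"
proof -
  define \<phi> where "\<phi> = (\<lambda>(c :: nat \<Rightarrow> 'a, a). (\<Sum>j<m. monom (c j) j) + monom a m)"
  have coeff_\<phi>: "coeff (\<phi> (c, a)) i = (if i < m then c i else if i = m then a else 0)" for c a i
    unfolding \<phi>_def by (auto simp: coeff_sum coeff_monom)
  have eq: "{h. poly_over L h \<and> degree h \<le> m \<and> coeff h m \<in> C} = \<phi> ` (({..<m} \<rightarrow>\<^sub>E L) \<times> C)"
  proof
    show "{h. poly_over L h \<and> degree h \<le> m \<and> coeff h m \<in> C} \<subseteq> \<phi> ` (({..<m} \<rightarrow>\<^sub>E L) \<times> C)"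
    proof
      fix h assume h: "h \<in> {h. poly_over L h \<and> degree h \<le> m \<and> coeff h m \<in> C}"
      have "h = \<phi> (restrict (coeff h) {..<m}, coeff h m)"
        by (rule poly_eqI) (use h in \<open>auto simp: coeff_\<phi> coeff_eq_0\<close>)
      moreover have "(restrict (coeff h) {..<m}, coeff h m) \<in> ({..<m} \<rightarrow>\<^sub>E L) \<times> C"
        using h by (auto simp: poly_over_def)
      ultimately show "h \<in> \<phi> ` (({..<m} \<rightarrow>\<^sub>E L) \<times> C)" by blast
    qed
    show "\<phi> ` (({..<m} \<rightarrow>\<^sub>E L) \<times> C) \<subseteq> {h. poly_over L h \<and> degree h \<le> m \<and> coeff h m \<in> C}"
      using C subfield_zero[OF L] by (auto simp: coeff_\<phi> poly_over_def intro!: degree_le)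
  qed
  have "inj_on \<phi> (({..<m} \<rightarrow>\<^sub>E L) \<times> C)"
  proof (rule inj_onI, clarify)
    fix c a c' a' assume h: "c \<in> {..<m} \<rightarrow>\<^sub>E L" "c' \<in> {..<m} \<rightarrow>\<^sub>E L" "\<phi> (c, a) = \<phi> (c', a')"
    have "coeff (\<phi> (c, a)) i = coeff (\<phi> (c', a')) i" for i using h(3) by simp
    then have "\<And>i. i < m \<Longrightarrow> c i = c' i" and "a = a'" by (metis coeff_\<phi> less_irrefl)+
    moreover have "c = c'"
    proof
      fix i show "c i = c' i"
        using h(1,2) calculation(1) by (cases "i < m") (auto simp: PiE_def extensional_def)
    qed
    ultimately show "c = c' \<and> a = a'" by simp
  qed
  then show ?thesis unfolding eq by (simp add: card_image card_cartesian_product card_PiE)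
qed

context
  fixes L :: "'a::field set" assumes L: "subfield_of L"
begin

lemma poly_over_0 [simp]: "poly_over L 0"
  and poly_over_1 [simp]: "poly_over L 1"
  and poly_over_pCons_0_1: "poly_over L [:0, 1:]"
  using subfield_zero[OF L] subfield_one[OF L]
  by (auto simp: poly_over_def coeff_1 coeff_pCons split: nat.split)

lemma poly_over_const: "c \<in> L \<Longrightarrow> poly_over L [:c:]"
  and poly_over_monom: "c \<in> L \<Longrightarrow> poly_over L (monom c n)"
  using subfield_zero[OF L] by (auto simp: poly_over_def coeff_pCons coeff_monom split: nat.split)

lemma poly_over_add: "poly_over L p \<Longrightarrow> poly_over L r \<Longrightarrow> poly_over L (p + r)"
  and poly_over_uminus: "poly_over L p \<Longrightarrow> poly_over L (- p)"
  and poly_over_diff: "poly_over L p \<Longrightarrow> poly_over L r \<Longrightarrow> poly_over L (p - r)"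
  and poly_over_smult: "c \<in> L \<Longrightarrow> poly_over L p \<Longrightarrow> poly_over L (smult c p)"
  unfolding poly_over_def
  using subfield_add[OF L] subfield_uminus[OF L] subfield_diff[OF L] subfield_mult[OF L] by simp_all

lemma poly_over_mult: "poly_over L p \<Longrightarrow> poly_over L r \<Longrightarrow> poly_over L (p * r)"
  unfolding poly_over_def coeff_mult by (intro allI subfield_sum[OF L] subfield_mult[OF L]) auto

lemma poly_over_division:
  assumes "poly_over L a" "poly_over L f" "f \<noteq> 0"
  shows "\<exists>h s. poly_over L h \<and> poly_over L s \<and> a = h * f + s \<and> (s = 0 \<or> degree s < degree f)"
  using assms(1)
proof (induction "degree a" arbitrary: a rule: less_induct)
  case (less a)
  show ?case
  proof (cases "a = 0 \<or> degree a < degree f")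
    case True
    then show ?thesis using less.prems by (intro exI[of _ 0] exI[of _ a]) auto
  next
    case False
    define c where "c = lead_coeff a / lead_coeff f"
    define k where "k = degree a - degree f"
    define a' where "a' = a - monom c k * f"
    have c: "c \<in> L" "c \<noteq> 0"
      unfolding c_def using less.prems assms False by (auto simp: poly_over_def subfield_divide[OF L])
    have "degree a = k + degree f" using False unfolding k_def by simp
    then have "coeff (monom c k * f) (degree a) = lead_coeff a"
      unfolding c_def using assms by (simp add: coeff_monom_mult)
    moreover have "degree (monom c k * f) = degree a"
      using False c assms unfolding k_def by (simp add: degree_mult_eq degree_monom_eq)
    ultimately have "coeff a' (degree a) = 0" "degree a' \<le> degree a"
      unfolding a'_def by (simp, metis degree_diff_le order_refl)
    then have deg: "degree a' < degree a" if "a' \<noteq> 0"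
      using that by (metis leading_coeff_0_iff le_neq_implies_less)
    have a': "poly_over L a'"
      unfolding a'_def using less.prems assms c by (intro poly_over_diff poly_over_mult poly_over_monom)
    have "\<exists>h s. poly_over L h \<and> poly_over L s \<and> a' = h * f + s \<and> (s = 0 \<or> degree s < degree f)"
    proof (cases "a' = 0")
      case True
      then show ?thesis by (intro exI[of _ 0]) simp
    qed (use less.hyps[OF deg a'] in blast)
    then obtain h s where hs: "poly_over L h" "poly_over L s" "a' = h * f + s"
      "s = 0 \<or> degree s < degree f" by blast
    have "a = (h + monom c k) * f + s" using hs(3) unfolding a'_def by (simp add: algebra_simps)
    then show ?thesis using hs c by (intro exI[of _ "h + monom c k"] exI[of _ s]) (auto intro: poly_over_add poly_over_monom)
  qed
qed

text \<open>Divide \<open>a\<close> by \<open>f\<close>: the remainder \<open>s\<close> solves \<open>s g = f t\<close> as well, so by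
  minimality it vanishes.\<close>

lemma minimal_solution_divides:
  assumes P: "poly_over L f" "poly_over L g" "poly_over L a" "poly_over L b" "f \<noteq> 0"
    and rel: "a * g = f * b"
    and minimal: "\<And>s t. poly_over L s \<Longrightarrow> poly_over L t \<Longrightarrow> s \<noteq> 0 \<Longrightarrow> degree s < degree f \<Longrightarrow>
      s * g = f * t \<Longrightarrow> False"
  shows "\<exists>h. poly_over L h \<and> a = f * h \<and> b = g * h"
proof -
  obtain h s where hs: "poly_over L h" "poly_over L s" "a = h * f + s" "s = 0 \<or> degree s < degree f"
    using poly_over_division[OF P(3,1,5)] by blast
  have eq: "s * g = f * (b - h * g)"
    using rel unfolding hs(3) by (simp add: algebra_simps)
  show ?thesis
  proof (cases "s = 0")
    case True
    then have "b = g * h" using eq P(5) by (simp add: algebra_simps)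
    then show ?thesis using hs True by (auto simp: mult.commute)
  next
    case False
    moreover have "poly_over L (b - h * g)" using P hs by (intro poly_over_diff poly_over_mult)
    ultimately show ?thesis using minimal[OF hs(2) _ False _ eq] hs(4) by blast
  qed
qed

end

lemma card_nonzero_poly_over_coeff_eq:
  fixes L :: "'a::{field,finite} set"
  assumes L: "subfield_of L" and c: "c \<in> L"
  shows "int (card {u. poly_over L u \<and> degree u \<le> k \<and> coeff u k = c \<and> u \<noteq> 0})
    = int (card L) ^ k - of_bool (c = 0)"
proof -
  define A where "A = {u. poly_over L u \<and> degree u \<le> k \<and> coeff u k \<in> {c}}"
  have "card A = card L ^ k"
    unfolding A_def using card_poly_over_coeff_in[OF L, of "{c}" k] c by simp
  moreover have "{u. poly_over L u \<and> degree u \<le> k \<and> coeff u k = c \<and> u \<noteq> 0} = A - {0}"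
    unfolding A_def by blast
  moreover have "0 \<in> A \<longleftrightarrow> c = 0" unfolding A_def using poly_over_0[OF L] by auto
  moreover have "card L ^ k \<ge> 1" using card_subfield_ge_2[OF L] by simp
  ultimately show ?thesis by (simp add: card_Diff_singleton_if of_nat_diff)
qed

lemma degree_ne_0_if_root:
  assumes "p \<noteq> 0" "poly p x = 0" shows "degree p \<noteq> 0"
proof
  assume "degree p = 0"
  then obtain a where "p = [:a:]" using degree0_coeffs by blast
  then show False using assms by simp
qed

text \<open>Reduction modulo \<open>p\<close> shows that these values are closed under multiplication,
  so they form a subfield containing \<open>L\<close> and \<open>x\<close>.\<close>

lemma adjoin_subset_poly_values:
  fixes L :: "'a::{field,finite} set"
  assumes L: "subfield_of L" and p: "poly_over L p" "p \<noteq> 0" "poly p x = 0"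
  shows "adjoin L x \<subseteq> (\<lambda>r. poly r x) ` {r. poly_over L r \<and> degree r < degree p}"
    (is "_ \<subseteq> ?Z")
proof -
  have "degree p \<noteq> 0" using degree_ne_0_if_root p(2,3) .
  then have reduce: "poly r x \<in> ?Z" if r: "poly_over L r" for r
  proof -
    obtain h s where hs: "poly_over L s" "r = h * p + s" "s = 0 \<or> degree s < degree p"
      using poly_over_division[OF L r p(1,2)] by blast
    have "poly r x = poly s x" using hs(2) p(3) by simp
    moreover have "degree s < degree p" using hs(3) \<open>degree p \<noteq> 0\<close> by auto
    ultimately show ?thesis using hs(1) by blast
  qed
  have "subfield_of ?Z"
  proof (rule finite_subring_is_subfield)
    show "0 \<in> ?Z" "1 \<in> ?Z" using reduce[of 0] reduce[of 1] L by simp_all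
    fix u v assume "u \<in> ?Z" "v \<in> ?Z"
    then obtain r s where "u = poly r x" "poly_over L r" "v = poly s x" "poly_over L s" by blast
    then show "u + v \<in> ?Z" "u * v \<in> ?Z" "- u \<in> ?Z"
      using reduce[of "r + s"] reduce[of "r * s"] reduce[of "- r"]
      by (simp_all add: poly_over_add[OF L] poly_over_mult[OF L] poly_over_uminus[OF L])
  qed
  moreover have "L \<subseteq> ?Z"
  proof
    fix c assume "c \<in> L"
    then show "c \<in> ?Z" using reduce[OF poly_over_const[OF L]] by simp
  qed
  moreover have "x \<in> ?Z" using reduce[OF poly_over_pCons_0_1[OF L]] by simp
  ultimately show ?thesis unfolding adjoin_def by blast
qed

lemma dim_adjoin_le_degree:
  fixes L :: "'a::{field,finite} set"
  assumes L: "subfield_of L" and p: "poly_over L p" "p \<noteq> 0" "poly p x = 0"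
  shows "dim_over L (adjoin L x) \<le> degree p"
proof -
  have "degree p \<noteq> 0" using degree_ne_0_if_root p(2,3) .
  have "card L ^ dim_over L (adjoin L x) = card (adjoin L x)"
    using card_subspace_over[OF L subspace_over_adjoin[OF L]] by simp
  also have "\<dots> \<le> card ((\<lambda>r. poly r x) ` {r. poly_over L r \<and> degree r < degree p})"
    by (rule card_mono[OF _ adjoin_subset_poly_values[OF L p]]) simp
  also have "\<dots> \<le> card {r. poly_over L r \<and> degree r \<le> degree p - 1 \<and> coeff r (degree p - 1) \<in> L}"
    using \<open>degree p \<noteq> 0\<close>
    by (intro card_image_le[THEN order_trans] card_mono finite_subset[OF _ finite_degree_le[of "degree p"]])
       (auto simp: poly_over_def)
  also have "\<dots> = card L ^ degree p"
    using card_poly_over_coeff_in[OF L order_refl] \<open>degree p \<noteq> 0\<close> by (simp add: power_eq_if)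
  finally show ?thesis using card_subfield_ge_2[OF L] by (simp add: power_le_imp_le_exp)
qed

section \<open>Ratios of values of polynomials of low degree\<close>

lemma triangular_recurrence_solution:
  fixes c :: "nat \<Rightarrow> int"
  assumes rec: "\<And>k. k \<le> n \<Longrightarrow> (\<Sum>d\<le>k. c d * Q ^ (k - d)) = w * Q ^ (2 * k) - 2 * Q ^ k"
  shows "c 0 = w - 2" and "1 \<le> k \<Longrightarrow> k \<le> n \<Longrightarrow> c k = w * Q ^ (2 * k - 1) * (Q - 1)"
proof -
  show "c 0 = w - 2" using rec[of 0] by simp
  assume k: "1 \<le> k" "k \<le> n"
  then obtain j where j: "k = Suc j" by (cases k) auto
  have "(\<Sum>d\<le>j. c d * Q ^ (Suc j - d)) = Q * (\<Sum>d\<le>j. c d * Q ^ (j - d))"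
    by (simp add: sum_distrib_left Suc_diff_le algebra_simps)
  then have "c (Suc j) = (w * Q ^ (2 * Suc j) - 2 * Q ^ Suc j) - Q * (w * Q ^ (2 * j) - 2 * Q ^ j)"
    using rec[of "Suc j"] rec[of j] k j by simp
  also have "\<dots> = w * Q ^ (2 * Suc j - 1) * (Q - 1)"
    by (simp add: algebra_simps)
  finally show "c k = w * Q ^ (2 * k - 1) * (Q - 1)" using j by simp
qed

locale poly_ratio =
  fixes L :: "'a::{field,finite} set" and lam :: 'a and l :: nat
  assumes L: "subfield_of L" and dim_adjoin_gt: "2 * l < dim_over L (adjoin L lam)"
begin

lemma poly_eval_nonzero:
  assumes "poly_over L p" "p \<noteq> 0" "degree p \<le> 2 * l"
  shows "poly p lam \<noteq> 0"
  using dim_adjoin_le_degree[OF L assms(1,2)] assms(3) dim_adjoin_gt by fastforce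

lemma poly_eval_inj:
  assumes "poly_over L p" "poly_over L r" "degree p \<le> 2 * l" "degree r \<le> 2 * l"
    and "poly p lam = poly r lam"
  shows "p = r"
proof (rule ccontr)
  assume "p \<noteq> r"
  moreover have "degree (p - r) \<le> 2 * l" using assms(3,4) degree_diff_le by blast
  ultimately have "poly (p - r) lam \<noteq> 0"
    using poly_eval_nonzero[OF poly_over_diff[OF L assms(1,2)]] by simp
  then show False using assms(5) by simp
qed

definition ratio_pairs :: "nat \<Rightarrow> 'a \<Rightarrow> ('a poly \<times> 'a poly) set" where
  "ratio_pairs k \<alpha> = {(u, v). poly_over L u \<and> poly_over L v \<and> u \<noteq> 0 \<and> v \<noteq> 0 \<and>
     degree u \<le> k \<and> degree v \<le> k \<and> poly u lam = \<alpha> * poly v lam}"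

definition is_ratio :: "'a \<Rightarrow> bool" where
  "is_ratio \<alpha> \<longleftrightarrow> ratio_pairs l \<alpha> \<noteq> {}"

definition ratio_degree :: "'a \<Rightarrow> nat" where
  "ratio_degree \<alpha> = (LEAST k. ratio_pairs k \<alpha> \<noteq> {})"

text \<open>A pair of polynomials of least degree realising \<open>\<alpha>\<close>; the choice is meaningful only
  when \<open>is_ratio \<alpha>\<close>, which every lemma about it assumes.\<close>

definition min_pair :: "'a \<Rightarrow> 'a poly \<times> 'a poly" where
  "min_pair \<alpha> = (SOME uv. uv \<in> ratio_pairs (ratio_degree \<alpha>) \<alpha>)"

definition min_num :: "'a \<Rightarrow> 'a poly" where "min_num \<alpha> = fst (min_pair \<alpha>)"
definition min_den :: "'a \<Rightarrow> 'a poly" where "min_den \<alpha> = snd (min_pair \<alpha>)"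

definition lead_pair :: "'a \<Rightarrow> 'a \<times> 'a" where
  "lead_pair \<alpha> = (coeff (min_num \<alpha>) (ratio_degree \<alpha>), coeff (min_den \<alpha>) (ratio_degree \<alpha>))"

lemma ratio_pairs_mono: "k \<le> k' \<Longrightarrow> ratio_pairs k \<alpha> \<subseteq> ratio_pairs k' \<alpha>"
  unfolding ratio_pairs_def by auto

lemma ratio_degree_le: "ratio_pairs k \<alpha> \<noteq> {} \<Longrightarrow> ratio_degree \<alpha> \<le> k"
  unfolding ratio_degree_def by (rule Least_le)

lemma is_ratio_nonzero: "is_ratio \<alpha> \<Longrightarrow> \<alpha> \<noteq> 0"
  unfolding is_ratio_def ratio_pairs_def using poly_eval_nonzero by fastforce

lemma no_ratio_pair_below_degree:
  assumes "poly_over L s" "poly_over L t" "s \<noteq> 0" "t \<noteq> 0"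
    and "degree s < ratio_degree \<alpha>" "degree t < ratio_degree \<alpha>" "poly s lam = \<alpha> * poly t lam"
  shows False
proof -
  have "(s, t) \<in> ratio_pairs (ratio_degree \<alpha> - 1) \<alpha>" unfolding ratio_pairs_def using assms by auto
  then have "ratio_degree \<alpha> \<le> ratio_degree \<alpha> - 1" by (intro ratio_degree_le) auto
  then show False using assms(5) by simp
qed

context
  fixes \<alpha> assumes \<alpha>: "is_ratio \<alpha>"
begin

lemma ratio_degree_le_l: "ratio_degree \<alpha> \<le> l"
  using ratio_degree_le \<alpha> unfolding is_ratio_def .

lemma min_pair_in_ratio_pairs: "(min_num \<alpha>, min_den \<alpha>) \<in> ratio_pairs (ratio_degree \<alpha>) \<alpha>"
proof -
  have "ratio_pairs (ratio_degree \<alpha>) \<alpha> \<noteq> {}"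
    unfolding ratio_degree_def by (rule LeastI[of _ l]) (use \<alpha> in \<open>simp add: is_ratio_def\<close>)
  then show ?thesis unfolding min_num_def min_den_def min_pair_def by (simp add: some_in_eq)
qed

lemma poly_over_min_num: "poly_over L (min_num \<alpha>)"
  and poly_over_min_den: "poly_over L (min_den \<alpha>)"
  and min_num_nonzero: "min_num \<alpha> \<noteq> 0"
  and min_den_nonzero: "min_den \<alpha> \<noteq> 0"
  and degree_min_num_le: "degree (min_num \<alpha>) \<le> ratio_degree \<alpha>"
  and degree_min_den_le: "degree (min_den \<alpha>) \<le> ratio_degree \<alpha>"
  and poly_min_num: "poly (min_num \<alpha>) lam = \<alpha> * poly (min_den \<alpha>) lam"
  using min_pair_in_ratio_pairs unfolding ratio_pairs_def by auto

lemma degree_min_pair_eq: "degree (min_num \<alpha>) = ratio_degree \<alpha> \<or> degree (min_den \<alpha>) = ratio_degree \<alpha>"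
  using no_ratio_pair_below_degree[OF poly_over_min_num poly_over_min_den min_num_nonzero min_den_nonzero
      _ _ poly_min_num] degree_min_num_le degree_min_den_le by fastforce

lemma lead_pair_nonzero: "lead_pair \<alpha> \<noteq> (0, 0)"
  using degree_min_pair_eq min_num_nonzero min_den_nonzero unfolding lead_pair_def
  by (auto simp del: leading_coeff_0_iff) (metis leading_coeff_0_iff)+

lemma poly_min_den_nonzero: "poly (min_den \<alpha>) lam \<noteq> 0"
  using poly_eval_nonzero[OF poly_over_min_den min_den_nonzero] degree_min_den_le ratio_degree_le_l
  by simp

lemma ratio_iff_cross_mult:
  assumes "poly_over L a" "poly_over L b" "degree a \<le> l" "degree b \<le> l"
  shows "poly a lam = \<alpha> * poly b lam \<longleftrightarrow> a * min_den \<alpha> = min_num \<alpha> * b"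
proof
  assume "poly a lam = \<alpha> * poly b lam"
  then show "a * min_den \<alpha> = min_num \<alpha> * b"
    using assms poly_min_num degree_min_num_le degree_min_den_le ratio_degree_le_l
      degree_mult_le[of a "min_den \<alpha>"] degree_mult_le[of "min_num \<alpha>" b]
    by (intro poly_eval_inj poly_over_mult[OF L] poly_over_min_num poly_over_min_den) simp_all
next
  assume "a * min_den \<alpha> = min_num \<alpha> * b"
  then have "poly a lam * poly (min_den \<alpha>) lam = \<alpha> * poly (min_den \<alpha>) lam * poly b lam"
    using poly_min_num by (metis mult.assoc mult.commute poly_mult)
  then show "poly a lam = \<alpha> * poly b lam" using poly_min_den_nonzero by simp
qed

lemma cross_mult_below_ratio_degree:
  assumes "poly_over L s" "poly_over L t" "s \<noteq> 0" "degree s < ratio_degree \<alpha>" "degree t < ratio_degree \<alpha>"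
    and cross: "s * min_den \<alpha> = min_num \<alpha> * t"
  shows False
proof -
  have "t \<noteq> 0" using assms(3) cross min_den_nonzero by auto
  moreover have "poly s lam = \<alpha> * poly t lam"
    using ratio_iff_cross_mult assms ratio_degree_le_l by simp
  ultimately show False using no_ratio_pair_below_degree[OF assms(1-3) _ assms(4,5)] by simp
qed

lemma min_pair_divides:
  assumes ab: "poly_over L a" "poly_over L b" and cross: "a * min_den \<alpha> = min_num \<alpha> * b"
  shows "\<exists>h. poly_over L h \<and> a = min_num \<alpha> * h \<and> b = min_den \<alpha> * h"
proof (cases "degree (min_num \<alpha>) = ratio_degree \<alpha>")
  case True
  show ?thesis
  proof (rule minimal_solution_divides[OF L poly_over_min_num poly_over_min_den ab min_num_nonzero cross])
    fix s t assume st: "poly_over L s" "poly_over L t" "s \<noteq> 0" "degree s < degree (min_num \<alpha>)"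
      "s * min_den \<alpha> = min_num \<alpha> * t"
    have "degree t \<le> degree s"
      using degree_le_of_cross_mult[OF st(5,3) min_num_nonzero min_den_nonzero] degree_min_den_le True
      by simp
    then show False using cross_mult_below_ratio_degree[OF st(1-3)] st(4,5) True by simp
  qed
next
  case False
  then have den: "degree (min_den \<alpha>) = ratio_degree \<alpha>" using degree_min_pair_eq by simp
  have "b * min_num \<alpha> = min_den \<alpha> * a" using cross by (simp add: algebra_simps)
  then have "\<exists>h. poly_over L h \<and> b = min_den \<alpha> * h \<and> a = min_num \<alpha> * h"
  proof (rule minimal_solution_divides[OF L poly_over_min_den poly_over_min_num ab(2,1) min_den_nonzero])
    fix s t assume st: "poly_over L s" "poly_over L t" "s \<noteq> 0" "degree s < degree (min_den \<alpha>)"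
      "s * min_num \<alpha> = min_den \<alpha> * t"
    have "t \<noteq> 0" using st(3,5) min_num_nonzero by auto
    moreover have "degree t \<le> degree s"
      using degree_le_of_cross_mult[OF st(5,3) min_den_nonzero min_num_nonzero] degree_min_num_le den
      by simp
    moreover have "t * min_den \<alpha> = min_num \<alpha> * s" using st(5) by (simp add: algebra_simps)
    ultimately show False using cross_mult_below_ratio_degree[OF st(2,1)] st(4) den by simp
  qed
  then show ?thesis by blast
qed

lemma ratio_pair_factor:
  assumes ab: "poly_over L a" "poly_over L b" "degree a \<le> k" "degree b \<le> k" "k \<le> l"
    and ratio: "poly a lam = \<alpha> * poly b lam"
  shows "\<exists>h. poly_over L h \<and> a = min_num \<alpha> * h \<and> b = min_den \<alpha> * h \<and> degree h \<le> k - ratio_degree \<alpha>"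
proof -
  have "a * min_den \<alpha> = min_num \<alpha> * b"
    using ratio_iff_cross_mult ab ratio by simp
  then obtain h where h: "poly_over L h" "a = min_num \<alpha> * h" "b = min_den \<alpha> * h"
    using min_pair_divides[OF ab(1,2)] by blast
  have "degree h \<le> k - ratio_degree \<alpha>"
  proof (cases "h = 0")
    case False
    then have "degree a = degree (min_num \<alpha>) + degree h" "degree b = degree (min_den \<alpha>) + degree h"
      using h min_num_nonzero min_den_nonzero by (simp_all add: degree_mult_eq)
    then show ?thesis using ab(3,4) degree_min_pair_eq by linarith
  qed simp
  then show ?thesis using h by blast
qed
end

definition nonzero_pairs :: "('a \<times> 'a) set" where
  "nonzero_pairs = {(x, y). x \<in> L \<and> y \<in> L \<and> (x, y) \<noteq> (0, 0)}"

text \<open>The last two conditions make the number of pairs of polynomials with leading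
  coefficients in \<open>W\<close> depend on \<open>W\<close> only through its cardinality.\<close>

definition scaling_class :: "('a \<times> 'a) set \<Rightarrow> bool" where
  "scaling_class W \<longleftrightarrow> W \<subseteq> nonzero_pairs \<and>
     (\<forall>c\<in>L - {0}. \<forall>(x, y)\<in>W. (c * x, c * y) \<in> W) \<and>
     {w\<in>W. fst w = 0} = {0} \<times> (L - {0}) \<and> {w\<in>W. snd w = 0} = (L - {0}) \<times> {0}"

definition ratio_count :: "('a \<times> 'a) set \<Rightarrow> nat \<Rightarrow> nat" where
  "ratio_count W d = card {\<alpha>. is_ratio \<alpha> \<and> ratio_degree \<alpha> = d \<and> lead_pair \<alpha> \<in> W}"

definition pairs_with_lead :: "('a \<times> 'a) set \<Rightarrow> nat \<Rightarrow> ('a poly \<times> 'a poly) set" where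
  "pairs_with_lead W k = {(u, v). poly_over L u \<and> poly_over L v \<and> u \<noteq> 0 \<and> v \<noteq> 0 \<and>
     degree u \<le> k \<and> degree v \<le> k \<and> (coeff u k, coeff v k) \<in> W}"

lemma lead_pair_in_nonzero_pairs: "is_ratio \<alpha> \<Longrightarrow> lead_pair \<alpha> \<in> nonzero_pairs"
  using lead_pair_nonzero poly_over_min_num poly_over_min_den
  unfolding nonzero_pairs_def lead_pair_def poly_over_def by auto

lemma scaling_class_scale_iff:
  assumes W: "scaling_class W" and c: "c \<in> L" "c \<noteq> 0"
  shows "(c * x, c * y) \<in> W \<longleftrightarrow> (x, y) \<in> W"
proof -
  have closed: "\<forall>d\<in>L - {0}. \<forall>(x, y)\<in>W. (d * x, d * y) \<in> W"
    using W unfolding scaling_class_def by (elim conjE)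
  have "inverse c \<in> L - {0}" using c subfield_inverse[OF L] by auto
  then have "(inverse c * (c * x), inverse c * (c * y)) \<in> W" if "(c * x, c * y) \<in> W"
    using closed that by fast
  moreover have "(c * x, c * y) \<in> W" if "(x, y) \<in> W" using closed that c by fast
  ultimately show ?thesis using c(2) by (auto simp: mult.assoc[symmetric])
qed

lemma coeff_mult_min_pair:
  assumes "is_ratio \<alpha>" "ratio_degree \<alpha> \<le> k" "degree h \<le> k - ratio_degree \<alpha>"
  shows "(coeff (min_num \<alpha> * h) k, coeff (min_den \<alpha> * h) k)
    = (coeff h (k - ratio_degree \<alpha>) * fst (lead_pair \<alpha>), coeff h (k - ratio_degree \<alpha>) * snd (lead_pair \<alpha>))"
  using coeff_mult_at_degree_bounds[OF degree_min_num_le[OF assms(1)] assms(3)]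
    coeff_mult_at_degree_bounds[OF degree_min_den_le[OF assms(1)] assms(3)] assms(2)
  by (simp add: lead_pair_def mult.commute)

lemma ratio_fiber_eq:
  assumes W: "scaling_class W" and \<alpha>: "is_ratio \<alpha>" and k: "ratio_degree \<alpha> \<le> k" "k \<le> l"
  defines "H \<equiv> {h. poly_over L h \<and> degree h \<le> k - ratio_degree \<alpha> \<and> coeff h (k - ratio_degree \<alpha>) \<in> L - {0}}"
  shows "{(u, v) \<in> pairs_with_lead W k. poly u lam = \<alpha> * poly v lam}
    = (if lead_pair \<alpha> \<in> W then (\<lambda>h. (min_num \<alpha> * h, min_den \<alpha> * h)) ` H else {})"
proof -
  note lead = lead_pair_in_nonzero_pairs[OF \<alpha>]
  have W_nonzero: "W \<subseteq> nonzero_pairs" using W unfolding scaling_class_def by simp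
  have in_W_iff: "(coeff (min_num \<alpha> * h) k, coeff (min_den \<alpha> * h) k) \<in> W \<longleftrightarrow> lead_pair \<alpha> \<in> W"
    if "h \<in> H" for h
    using that coeff_mult_min_pair[OF \<alpha> k(1)] scaling_class_scale_iff[OF W]
    unfolding H_def poly_over_def by (cases "lead_pair \<alpha>") auto
  have "(u, v) \<in> (\<lambda>h. (min_num \<alpha> * h, min_den \<alpha> * h)) ` H \<and> lead_pair \<alpha> \<in> W"
    if uv_in: "(u, v) \<in> pairs_with_lead W k" and ratio: "poly u lam = \<alpha> * poly v lam" for u v
  proof -
    have uv: "poly_over L u" "poly_over L v" "degree u \<le> k" "degree v \<le> k" "(coeff u k, coeff v k) \<in> W"
      using uv_in unfolding pairs_with_lead_def by auto
    obtain h where h: "poly_over L h" "u = min_num \<alpha> * h" "v = min_den \<alpha> * h" "degree h \<le> k - ratio_degree \<alpha>"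
      using ratio_pair_factor[OF \<alpha> uv(1-4) k(2) ratio] by blast
    have "coeff h (k - ratio_degree \<alpha>) \<noteq> 0"
      using uv(5) W_nonzero coeff_mult_min_pair[OF \<alpha> k(1) h(4)] h(2,3) unfolding nonzero_pairs_def by auto
    then have "h \<in> H" using h(1,4) unfolding H_def poly_over_def by auto
    then show ?thesis using in_W_iff uv(5) h(2,3) by auto
  qed
  moreover have "(min_num \<alpha> * h, min_den \<alpha> * h) \<in> pairs_with_lead W k"
    if "h \<in> H" "lead_pair \<alpha> \<in> W" for h
  proof -
    have h: "poly_over L h" "h \<noteq> 0" "degree h \<le> k - ratio_degree \<alpha>"
      using that(1) unfolding H_def by auto
    have "degree (p * h) \<le> k" if "degree p \<le> ratio_degree \<alpha>" for p
      using degree_mult_le[of p h] h(3) k(1) that by linarith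
    then have "degree (min_num \<alpha> * h) \<le> k" "degree (min_den \<alpha> * h) \<le> k"
      using degree_min_num_le[OF \<alpha>] degree_min_den_le[OF \<alpha>] by blast+
    then show ?thesis
      using h in_W_iff[OF that(1)] that(2) min_num_nonzero[OF \<alpha>] min_den_nonzero[OF \<alpha>]
        poly_over_mult[OF L] poly_over_min_num[OF \<alpha>] poly_over_min_den[OF \<alpha>]
      unfolding pairs_with_lead_def by auto
  qed
  ultimately show ?thesis using poly_min_num[OF \<alpha>] by auto
qed

lemma card_ratio_fiber:
  assumes W: "scaling_class W" and k: "k \<le> l"
  shows "card {(u, v) \<in> pairs_with_lead W k. poly u lam = \<alpha> * poly v lam}
    = (if is_ratio \<alpha> \<and> ratio_degree \<alpha> \<le> k \<and> lead_pair \<alpha> \<in> W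
       then (card L - 1) * card L ^ (k - ratio_degree \<alpha>) else 0)"
proof (cases "is_ratio \<alpha> \<and> ratio_degree \<alpha> \<le> k")
  case True
  define H where "H = {h. poly_over L h \<and> degree h \<le> k - ratio_degree \<alpha> \<and> coeff h (k - ratio_degree \<alpha>) \<in> L - {0}}"
  have "inj_on (\<lambda>h. (min_num \<alpha> * h, min_den \<alpha> * h)) H"
    using min_num_nonzero True by (auto intro: inj_onI)
  moreover have "card H = card L ^ (k - ratio_degree \<alpha>) * (card L - 1)"
    unfolding H_def card_poly_over_coeff_in[OF L Diff_subset] card_subfield_minus_zero[OF L] ..
  ultimately show ?thesis
    using ratio_fiber_eq[OF W _ _ k, of \<alpha>] True unfolding H_def by (simp add: card_image)
next
  case False
  have empty: "{(u, v) \<in> pairs_with_lead W k. poly u lam = \<alpha> * poly v lam} = {}"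
  proof (rule ccontr)
    assume "\<not> ?thesis"
    then obtain u v where "(u, v) \<in> ratio_pairs k \<alpha>"
      unfolding pairs_with_lead_def ratio_pairs_def by auto
    then show False
      using False ratio_pairs_mono[OF k] ratio_degree_le unfolding is_ratio_def by blast
  qed
  show ?thesis unfolding empty using False by auto
qed

lemma card_pairs_with_lead_by_degree:
  assumes W: "scaling_class W" and k: "k \<le> l"
  shows "card (pairs_with_lead W k) = (\<Sum>d\<le>k. ratio_count W d * ((card L - 1) * card L ^ (k - d)))"
proof -
  define fiber where "fiber \<alpha> = {(u, v) \<in> pairs_with_lead W k. poly u lam = \<alpha> * poly v lam}" for \<alpha>
  define A where "A = {\<alpha>. is_ratio \<alpha> \<and> ratio_degree \<alpha> \<le> k \<and> lead_pair \<alpha> \<in> W}"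
  have den_nonzero: "poly v lam \<noteq> 0" if "(u, v) \<in> pairs_with_lead W k" for u v
    using that poly_eval_nonzero k unfolding pairs_with_lead_def by auto
  have "pairs_with_lead W k = (\<Union>\<alpha>. fiber \<alpha>)"
  proof (intro equalityI subsetI)
    fix uv assume "uv \<in> pairs_with_lead W k"
    then show "uv \<in> (\<Union>\<alpha>. fiber \<alpha>)"
      using den_nonzero unfolding fiber_def by (intro UN_I[of "poly (fst uv) lam / poly (snd uv) lam"]) auto
  qed (auto simp: fiber_def)
  moreover have "fiber \<alpha> \<inter> fiber \<beta> = {}" if "\<alpha> \<noteq> \<beta>" for \<alpha> \<beta>
    using den_nonzero that unfolding fiber_def by auto
  moreover have "finite (fiber \<alpha>)" for \<alpha>
    by (rule finite_subset[of _ "{u. degree u \<le> k} \<times> {v. degree v \<le> k}"])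
       (auto simp: fiber_def pairs_with_lead_def finite_degree_le)
  ultimately have "card (pairs_with_lead W k) = (\<Sum>\<alpha>\<in>UNIV. card (fiber \<alpha>))"
    by (simp add: card_UN_disjoint)
  also have "\<dots> = (\<Sum>\<alpha>\<in>A. (card L - 1) * card L ^ (k - ratio_degree \<alpha>))"
    unfolding fiber_def card_ratio_fiber[OF W k] A_def by (simp add: sum.If_cases Int_def)
  also have "\<dots> = (\<Sum>d\<le>k. \<Sum>\<alpha>\<in>{\<alpha>\<in>A. ratio_degree \<alpha> = d}. (card L - 1) * card L ^ (k - ratio_degree \<alpha>))"
    by (rule sum.group[symmetric]) (auto simp: A_def)
  also have "\<dots> = (\<Sum>d\<le>k. ratio_count W d * ((card L - 1) * card L ^ (k - d)))"
    by (intro sum.cong refl) (auto simp: ratio_count_def A_def intro!: arg_cong[where f = card])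
  finally show ?thesis .
qed

lemma card_pairs_with_lead:
  assumes W: "scaling_class W"
  shows "int (card (pairs_with_lead W k))
    = int (card W) * int (card L) ^ (2 * k) - 2 * (int (card L) - 1) * int (card L) ^ k"
proof -
  define U where "U c = {u. poly_over L u \<and> degree u \<le> k \<and> coeff u k = c \<and> u \<noteq> 0}" for c
  have card_U: "int (card (U c)) = int (card L) ^ k - (if c = 0 then 1 else 0)" if "c \<in> L" for c
    unfolding U_def using card_nonzero_poly_over_coeff_eq[OF L that] by simp
  have W_nonzero: "W \<subseteq> nonzero_pairs" using W unfolding scaling_class_def by simp
  have "pairs_with_lead W k = (\<Union>w\<in>W. U (fst w) \<times> U (snd w))"
    unfolding pairs_with_lead_def U_def by auto
  moreover have "finite (U c)" for c
    unfolding U_def by (rule finite_subset[OF _ finite_degree_le[of k]]) auto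
  then have "card (\<Union>w\<in>W. U (fst w) \<times> U (snd w)) = (\<Sum>w\<in>W. card (U (fst w) \<times> U (snd w)))"
    by (intro card_UN_disjoint) (auto simp: U_def)
  ultimately have "card (pairs_with_lead W k) = (\<Sum>w\<in>W. card (U (fst w)) * card (U (snd w)))"
    by (simp add: card_cartesian_product)
  then have "int (card (pairs_with_lead W k)) = (\<Sum>w\<in>W. int (card (U (fst w))) * int (card (U (snd w))))"
    by simp
  also have "\<dots> = (\<Sum>w\<in>W. int (card L) ^ (2 * k) - int (card L) ^ k * (if fst w = 0 then 1 else 0)
                     - int (card L) ^ k * (if snd w = 0 then 1 else 0))"
  proof (rule sum.cong)
    fix w assume "w \<in> W"
    then have w: "fst w \<in> L" "snd w \<in> L" "w \<noteq> (0, 0)" using W_nonzero unfolding nonzero_pairs_def by auto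
    show "int (card (U (fst w))) * int (card (U (snd w))) = int (card L) ^ (2 * k)
        - int (card L) ^ k * (if fst w = 0 then 1 else 0) - int (card L) ^ k * (if snd w = 0 then 1 else 0)"
      unfolding card_U[OF w(1)] card_U[OF w(2)] using w(3)
      by (cases w) (auto simp: power_mult power2_eq_square algebra_simps)
  qed simp
  also have "\<dots> = int (card W) * int (card L) ^ (2 * k) - int (card L) ^ k * int (card {w\<in>W. fst w = 0})
                 - int (card L) ^ k * int (card {w\<in>W. snd w = 0})"
    by (simp add: sum_subtractf sum_distrib_left[symmetric] sum.inter_filter[symmetric])
  also have "\<dots> = int (card W) * int (card L) ^ (2 * k) - 2 * (int (card L) - 1) * int (card L) ^ k"
    using W card_subfield_ge_2[OF L] unfolding scaling_class_def
    by (simp add: card_cartesian_product card_subfield_minus_zero[OF L] of_nat_diff)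
  finally show ?thesis .
qed

text \<open>Counting the pairs with leading coefficients in \<open>W\<close> by the ratio they realise, and
  directly, gives a triangular system for the numbers of ratios of each degree.\<close>

lemma ratio_count_formula:
  assumes W: "scaling_class W" and card_W: "card W = w * (card L - 1)"
  shows "int (ratio_count W 0) = int w - 2"
    and "1 \<le> k \<Longrightarrow> k \<le> l \<Longrightarrow>
      int (ratio_count W k) = int w * int (card L) ^ (2 * k - 1) * (int (card L) - 1)"
proof -
  define Q where "Q = int (card L)"
  have Q: "Q \<ge> 2" "int (card W) = int w * (Q - 1)"
    using card_subfield_ge_2[OF L] card_W unfolding Q_def by (auto simp: of_nat_diff)
  have "(\<Sum>d\<le>k. int (ratio_count W d) * Q ^ (k - d)) = int w * Q ^ (2 * k) - 2 * Q ^ k"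
    if "k \<le> l" for k
  proof -
    have "(\<Sum>d\<le>k. int (ratio_count W d) * Q ^ (k - d)) * (Q - 1) = int (card (pairs_with_lead W k))"
      unfolding card_pairs_with_lead_by_degree[OF W that] of_nat_sum sum_distrib_right
      using card_subfield_ge_2[OF L] by (intro sum.cong refl) (simp add: Q_def of_nat_diff)
    also have "\<dots> = (int w * Q ^ (2 * k) - 2 * Q ^ k) * (Q - 1)"
      unfolding card_pairs_with_lead[OF W] Q(2) Q_def by (simp add: algebra_simps)
    finally show ?thesis using Q by simp
  qed
  from triangular_recurrence_solution[where c = "\<lambda>d. int (ratio_count W d)" and n = l, OF this]
  show "int (ratio_count W 0) = int w - 2"
    and "1 \<le> k \<Longrightarrow> k \<le> l \<Longrightarrow> int (ratio_count W k) = int w * int (card L) ^ (2 * k - 1) * (int (card L) - 1)"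
    unfolding Q_def by simp_all
qed

lemma scaling_class_nonzero_pairs: "scaling_class nonzero_pairs"
  unfolding scaling_class_def nonzero_pairs_def using subfield_mult[OF L] subfield_zero[OF L] by auto

lemma card_nonzero_pairs: "card nonzero_pairs = (card L + 1) * (card L - 1)"
proof -
  have "nonzero_pairs = L \<times> L - {(0, 0)}" unfolding nonzero_pairs_def by auto
  then have "card nonzero_pairs = card L * card L - 1"
    using subfield_zero[OF L] by (simp add: card_cartesian_product)
  then show ?thesis by (simp add: algebra_simps diff_mult_distrib2)
qed

lemma ratio_count_nonzero_pairs:
  "ratio_count nonzero_pairs d = card {\<alpha>. is_ratio \<alpha> \<and> ratio_degree \<alpha> = d}"
  unfolding ratio_count_def using lead_pair_in_nonzero_pairs by metis

lemma card_ratio_degree_less: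
  assumes "1 \<le> k" "k \<le> l"
  shows "int (card {\<alpha>. is_ratio \<alpha> \<and> ratio_degree \<alpha> < k}) = int (card L) ^ (2 * k - 1) - 1"
  using assms
proof (induction k rule: nat_induct_at_least)
  case base
  have "{\<alpha>. is_ratio \<alpha> \<and> ratio_degree \<alpha> < 1} = {\<alpha>. is_ratio \<alpha> \<and> ratio_degree \<alpha> = 0}" by auto
  then show ?case
    using ratio_count_formula(1)[OF scaling_class_nonzero_pairs card_nonzero_pairs]
    by (simp add: ratio_count_nonzero_pairs)
next
  case (Suc k)
  have "{\<alpha>. is_ratio \<alpha> \<and> ratio_degree \<alpha> < Suc k}
      = {\<alpha>. is_ratio \<alpha> \<and> ratio_degree \<alpha> < k} \<union> {\<alpha>. is_ratio \<alpha> \<and> ratio_degree \<alpha> = k}" by auto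
  moreover have "card ({\<alpha>. is_ratio \<alpha> \<and> ratio_degree \<alpha> < k} \<union> {\<alpha>. is_ratio \<alpha> \<and> ratio_degree \<alpha> = k})
      = card {\<alpha>. is_ratio \<alpha> \<and> ratio_degree \<alpha> < k} + card {\<alpha>. is_ratio \<alpha> \<and> ratio_degree \<alpha> = k}"
    by (rule card_Un_disjoint) auto
  ultimately have "int (card {\<alpha>. is_ratio \<alpha> \<and> ratio_degree \<alpha> < Suc k})
      = (int (card L) ^ (2 * k - 1) - 1) + (int (card L) + 1) * int (card L) ^ (2 * k - 1) * (int (card L) - 1)"
    using Suc ratio_count_formula(2)[OF scaling_class_nonzero_pairs card_nonzero_pairs, of k]
    by (simp add: ratio_count_nonzero_pairs)
  also have "\<dots> = int (card L) ^ ((2 * k - 1) + 2) - 1"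
    by (simp only: power_add) (simp add: algebra_simps power2_eq_square)
  also have "(2 * k - 1) + 2 = 2 * Suc k - 1" using Suc(1) by simp
  finally show ?case .
qed
end

section \<open>The orbit code\<close>

lemma scaled_eq_iff_quotient_in_stabiliser:
  fixes S :: "'a::{field,finite} set"
  assumes stab: "\<And>\<gamma>. \<gamma> \<noteq> 0 \<Longrightarrow> (\<lambda>x. \<gamma> * x) ` S = S \<longleftrightarrow> \<gamma> \<in> F" and "\<alpha> \<noteq> 0" "\<beta> \<noteq> 0"
  shows "(\<lambda>x. \<beta> * x) ` S = (\<lambda>x. \<alpha> * x) ` S \<longleftrightarrow> \<beta> / \<alpha> \<in> F"
proof -
  have scale_scale: "(\<lambda>x. c * x) ` ((\<lambda>x. d * x) ` S) = (\<lambda>x. (c * d) * x) ` S" for c d :: 'a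
    by (simp add: image_image mult.assoc)
  have "(\<lambda>x. \<beta> * x) ` S = (\<lambda>x. \<alpha> * x) ` S \<longleftrightarrow> (\<lambda>x. (\<beta> / \<alpha>) * x) ` S = S"
  proof
    assume "(\<lambda>x. \<beta> * x) ` S = (\<lambda>x. \<alpha> * x) ` S"
    then have "(\<lambda>x. inverse \<alpha> * x) ` ((\<lambda>x. \<beta> * x) ` S) = (\<lambda>x. inverse \<alpha> * x) ` ((\<lambda>x. \<alpha> * x) ` S)"
      by simp
    then show "(\<lambda>x. (\<beta> / \<alpha>) * x) ` S = S"
      using assms(2) unfolding scale_scale by (simp add: divide_inverse mult.commute)
  next
    assume "(\<lambda>x. (\<beta> / \<alpha>) * x) ` S = S"
    then have "(\<lambda>x. \<alpha> * x) ` ((\<lambda>x. (\<beta> / \<alpha>) * x) ` S) = (\<lambda>x. \<alpha> * x) ` S" by simp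
    then show "(\<lambda>x. \<beta> * x) ` S = (\<lambda>x. \<alpha> * x) ` S" using assms(2) unfolding scale_scale by simp
  qed
  also have "\<dots> \<longleftrightarrow> \<beta> / \<alpha> \<in> F" by (rule stab) (use assms(2,3) in simp)
  finally show ?thesis .
qed

text \<open>Orbit-stabiliser: each subspace of the orbit is \<open>\<alpha> S\<close> for exactly \<open>|F| - 1\<close>
  scalars \<open>\<alpha>\<close>.\<close>

lemma card_orb_filter_mult:
  fixes S :: "'a::{field,finite} set"
  assumes stab: "\<And>\<gamma>. \<gamma> \<noteq> 0 \<Longrightarrow> (\<lambda>x. \<gamma> * x) ` S = S \<longleftrightarrow> \<gamma> \<in> F"
  shows "card {V \<in> orb S. P V} * card (F - {0}) = card {\<alpha>. \<alpha> \<noteq> 0 \<and> P ((\<lambda>x. \<alpha> * x) ` S)}"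
proof -
  define A where "A = {\<alpha>. \<alpha> \<noteq> 0 \<and> P ((\<lambda>x. \<alpha> * x) ` S)}"
  have "card A = (\<Sum>V\<in>{V \<in> orb S. P V}. \<Sum>\<alpha>\<in>{\<alpha> \<in> A. (\<lambda>x. \<alpha> * x) ` S = V}. 1)"
    by (subst sum.group) (auto simp: A_def orb_def)
  also have "\<dots> = (\<Sum>V\<in>{V \<in> orb S. P V}. card (F - {0}))"
  proof (rule sum.cong)
    fix V assume "V \<in> {V \<in> orb S. P V}"
    then obtain \<alpha> where \<alpha>: "\<alpha> \<noteq> 0" "V = (\<lambda>x. \<alpha> * x) ` S" "P V" unfolding orb_def by auto
    then have "{\<beta> \<in> A. (\<lambda>x. \<beta> * x) ` S = V} = {\<beta>. \<beta> \<noteq> 0 \<and> (\<lambda>x. \<beta> * x) ` S = (\<lambda>x. \<alpha> * x) ` S}"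
      unfolding A_def by auto
    also have "\<dots> = {\<beta>. \<beta> \<noteq> 0 \<and> \<beta> / \<alpha> \<in> F}"
      using scaled_eq_iff_quotient_in_stabiliser[OF stab \<alpha>(1)] by blast
    also have "\<dots> = (\<lambda>c. c * \<alpha>) ` (F - {0})"
      using \<alpha>(1) by (auto intro!: image_eqI[where x = "_ / \<alpha>"])
    finally show "(\<Sum>\<beta>\<in>{\<beta> \<in> A. (\<lambda>x. \<beta> * x) ` S = V}. 1) = card (F - {0})"
      using \<alpha>(1) by (simp add: card_image inj_on_def)
  qed simp
  finally show ?thesis unfolding A_def by simp
qed

text \<open>The closed form of the top weight, with \<open>x = q^(4l - 4)\<close>.\<close>

lemma top_weight_identity:
  fixes q x N w :: real
  assumes q: "q > 1" and w: "w * (q - 1) = N - 1 - (q ^ 2 * x - 1) - (q + 1) * (q ^ 2 * x) * (q ^ 2 - 1)"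
  shows "w = (N - 1) / (q - 1) - (q + 1)
    - (q + 1) * q ^ 2 * ((q * x - q) * (q - 1) + (q + 1) * (q ^ 4 * x - 1)) / (q ^ 4 - 1)"
proof -
  define E where "E = (q * x - q) * (q - 1) + (q + 1) * (q ^ 4 * x - 1)"
  have "q ^ 4 > 1" using q by (simp add: one_less_power)
  then have nz: "q - 1 \<noteq> 0" "q ^ 4 - 1 \<noteq> 0" using q by linarith+
  have cleared: "w * (q - 1) * (q ^ 4 - 1)
      = (N - 1) * (q ^ 4 - 1) - (q + 1) * (q - 1) * (q ^ 4 - 1) - (q + 1) * q ^ 2 * E * (q - 1)"
    unfolding w E_def by algebra
  have "w = w * (q - 1) * (q ^ 4 - 1) / ((q - 1) * (q ^ 4 - 1))"
    using nz by simp
  also have "\<dots> = ((N - 1) * (q ^ 4 - 1) - (q + 1) * (q - 1) * (q ^ 4 - 1) - (q + 1) * q ^ 2 * E * (q - 1))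
      / ((q - 1) * (q ^ 4 - 1))"
    unfolding cleared ..
  also have "\<dots> = (N - 1) / (q - 1) - (q + 1) - (q + 1) * q ^ 2 * E / (q ^ 4 - 1)"
    using nz by (simp add: field_simps)
  finally show ?thesis unfolding E_def .
qed

locale orbit_code = poly_ratio L lam l for L :: "'a::{field,finite} set" and lam l +
  fixes F :: "'a set" and q :: nat
  assumes F: "subfield_of F" and card_F: "card F = q" and card_L: "card L = q ^ 2"
    and F_subset_L: "F \<subseteq> L" and l_pos: "1 \<le> l"
begin

definition code_polys :: "'a poly set" where
  "code_polys = {p. poly_over L p \<and> degree p \<le> l \<and> coeff p l \<in> F}"

definition code_space :: "'a set" where
  "code_space = (\<lambda>p. poly p lam) ` code_polys"

definition F_rational_pairs :: "('a \<times> 'a) set" where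
  "F_rational_pairs = {(x, y) \<in> nonzero_pairs. x = 0 \<or> y = 0 \<or> x / y \<in> F}"

definition inter_dim :: "'a \<Rightarrow> nat" where
  "inter_dim \<alpha> = (if is_ratio \<alpha> then 2 * (l - ratio_degree \<alpha>) + of_bool (lead_pair \<alpha> \<in> F_rational_pairs) else 0)"

lemma q_ge_2: "q \<ge> 2"
  using card_subfield_ge_2[OF F] card_F by simp

lemma F_rational_pairs_eq:
  "F_rational_pairs = ({0} \<times> (L - {0})) \<union> (\<lambda>(c, x). (x, c * x)) ` (F \<times> (L - {0}))"
proof (intro equalityI subsetI)
  fix w assume w: "w \<in> F_rational_pairs"
  then obtain x y where xy: "w = (x, y)" "x \<in> L" "y \<in> L" "(x, y) \<noteq> (0, 0)" "x = 0 \<or> y = 0 \<or> x / y \<in> F"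
    unfolding F_rational_pairs_def nonzero_pairs_def by auto
  show "w \<in> ({0} \<times> (L - {0})) \<union> (\<lambda>(c, x). (x, c * x)) ` (F \<times> (L - {0}))"
  proof (cases "x = 0")
    case False
    have "y / x \<in> F"
      using xy(5) False subfield_zero[OF F] subfield_inverse[OF F, of "x / y"] by auto
    then show ?thesis using xy False by (intro UnI2 image_eqI[of _ _ "(y / x, x)"]) auto
  qed (use xy in auto)
next
  fix w assume "w \<in> ({0} \<times> (L - {0})) \<union> (\<lambda>(c, x). (x, c * x)) ` (F \<times> (L - {0}))"
  then show "w \<in> F_rational_pairs"
    using F_subset_L subfield_mult[OF L] subfield_zero[OF L] subfield_divide[OF F] subfield_one[OF F]
    unfolding F_rational_pairs_def nonzero_pairs_def by auto
qed

lemma card_F_rational_pairs: "card F_rational_pairs = (q + 1) * (card L - 1)"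
proof -
  have "inj_on (\<lambda>(c, x). (x, c * x)) (F \<times> (L - {0}))" by (auto intro: inj_onI)
  then have "card ((\<lambda>(c, x). (x, c * x)) ` (F \<times> (L - {0}))) = q * (card L - 1)"
    using card_F card_subfield_minus_zero[OF L] by (simp add: card_image card_cartesian_product)
  moreover have "card ({0} \<times> (L - {0})) = card L - 1"
    using card_subfield_minus_zero[OF L] by (simp add: card_cartesian_product)
  ultimately show ?thesis unfolding F_rational_pairs_eq by (subst card_Un_disjoint) auto
qed

lemma scaling_class_F_rational_pairs: "scaling_class F_rational_pairs"
  unfolding scaling_class_def F_rational_pairs_def nonzero_pairs_def
  using subfield_mult[OF L] subfield_zero[OF L] subfield_zero[OF F] by auto

lemma card_scalars_into_F:
  assumes xy: "(x, y) \<in> nonzero_pairs"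
  shows "card {c \<in> L. c * x \<in> F \<and> c * y \<in> F} = (if (x, y) \<in> F_rational_pairs then q else 1)"
proof (cases "(x, y) \<in> F_rational_pairs")
  case True
  define z where "z = (if y = 0 then x else y)"
  have z: "z \<in> L" "z \<noteq> 0" using xy unfolding z_def nonzero_pairs_def by auto
  have "{c \<in> L. c * x \<in> F \<and> c * y \<in> F} = {c \<in> L. c * z \<in> F}"
  proof (intro Collect_cong conj_cong refl iffI)
    fix c assume c: "c * z \<in> F"
    show "c * x \<in> F \<and> c * y \<in> F"
    proof (cases "x = 0 \<or> y = 0")
      case False
      then have "c * y \<in> F" "x / y \<in> F" using c True unfolding z_def F_rational_pairs_def by auto
      moreover have "c * x = (c * y) * (x / y)" using False by simp
      ultimately show ?thesis using subfield_mult[OF F] by metis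
    qed (use c subfield_zero[OF F] in \<open>auto simp: z_def\<close>)
  qed (auto simp: z_def)
  also have "\<dots> = (\<lambda>w. w / z) ` F"
    using z F_subset_L subfield_divide[OF L] by (auto intro!: image_eqI[where x = "_ * z"])
  finally show ?thesis
    using True card_F z(2) by (simp add: card_image inj_on_def)
next
  case False
  then have "x \<noteq> 0" "y \<noteq> 0" "x / y \<notin> F" using xy unfolding F_rational_pairs_def by auto
  then have "{c \<in> L. c * x \<in> F \<and> c * y \<in> F} = {0}"
    using subfield_divide[OF F] subfield_zero[OF F] subfield_zero[OF L]
    by (auto, metis mult_divide_mult_cancel_left_if)
  then show ?thesis using False by simp
qed

lemma code_space_eq:
  "code_space = {(\<Sum>j<l. c j * lam ^ j) + a * lam ^ l | c a. (\<forall>j<l. c j \<in> L) \<and> a \<in> F}"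
proof (intro equalityI subsetI)
  fix x assume "x \<in> code_space"
  then obtain p where p: "p \<in> code_polys" "x = poly p lam" unfolding code_space_def by blast
  then have "x = (\<Sum>j<Suc l. coeff p j * lam ^ j)"
    using poly_eq_sum_lessThan[of p "Suc l"] unfolding code_polys_def by simp
  moreover have "\<forall>j<l. coeff p j \<in> L" "coeff p l \<in> F"
    using p(1) unfolding code_polys_def poly_over_def by auto
  ultimately show "x \<in> {(\<Sum>j<l. c j * lam ^ j) + a * lam ^ l | c a. (\<forall>j<l. c j \<in> L) \<and> a \<in> F}"
    by auto
next
  fix x assume "x \<in> {(\<Sum>j<l. c j * lam ^ j) + a * lam ^ l | c a. (\<forall>j<l. c j \<in> L) \<and> a \<in> F}"
  then obtain c a where ca: "x = (\<Sum>j<l. c j * lam ^ j) + a * lam ^ l" "\<forall>j<l. c j \<in> L" "a \<in> F"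
    by blast
  define p where "p = (\<Sum>j<l. monom (c j) j) + monom a l"
  have coeff_p: "coeff p i = (if i < l then c i else if i = l then a else 0)" for i
    unfolding p_def by (auto simp: coeff_sum coeff_monom)
  have "p \<in> code_polys"
    using ca F_subset_L subfield_zero[OF L] unfolding code_polys_def poly_over_def
    by (auto simp: coeff_p intro!: degree_le)
  moreover have "poly p lam = x" unfolding p_def ca(1) by (simp add: poly_sum poly_monom)
  ultimately show "x \<in> code_space" unfolding code_space_def by blast
qed

lemma subspace_code_space: "subspace_over F code_space"
  unfolding subspace_over_def code_space_def
proof (intro conjI ballI)
  show "0 \<in> (\<lambda>p. poly p lam) ` code_polys"
    using subfield_zero[OF F] by (intro image_eqI[of _ _ 0]) (auto simp: code_polys_def poly_over_0[OF L])
next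
  fix x y assume "x \<in> (\<lambda>p. poly p lam) ` code_polys" "y \<in> (\<lambda>p. poly p lam) ` code_polys"
  then obtain p r where "p \<in> code_polys" "r \<in> code_polys" "x = poly p lam" "y = poly r lam" by blast
  then show "x + y \<in> (\<lambda>p. poly p lam) ` code_polys"
    using poly_over_add[OF L] subfield_add[OF F] degree_add_le
    by (intro image_eqI[of _ _ "p + r"]) (auto simp: code_polys_def)
next
  fix c x assume "c \<in> F" "x \<in> (\<lambda>p. poly p lam) ` code_polys"
  then obtain p where "p \<in> code_polys" "x = poly p lam" by blast
  then show "c * x \<in> (\<lambda>p. poly p lam) ` code_polys"
    using \<open>c \<in> F\<close> poly_over_smult[OF L] subfield_mult[OF F] F_subset_L
    by (intro image_eqI[of _ _ "smult c p"]) (auto simp: code_polys_def poly_over_0[OF L])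
qed

lemma card_code_space: "card code_space = q ^ (2 * l + 1)"
proof -
  have "inj_on (\<lambda>p. poly p lam) code_polys"
    by (rule inj_onI, rule poly_eval_inj) (auto simp: code_polys_def)
  moreover have "card code_polys = card L ^ l * card F"
    unfolding code_polys_def by (rule card_poly_over_coeff_in[OF L F_subset_L])
  ultimately show ?thesis
    unfolding code_space_def using card_L card_F by (simp add: card_image power_mult power_add)
qed

lemma dim_code_space: "dim_over F code_space = 2 * l + 1"
  using dim_over_eqI_card[OF F subspace_code_space] card_code_space card_F by simp

lemma code_space_Int_scaled_non_ratio:
  assumes "\<not> is_ratio \<alpha>"
  shows "code_space \<inter> (\<lambda>x. \<alpha> * x) ` code_space = {0}"
proof -
  have "x = 0" if x: "x \<in> code_space" "x \<in> (\<lambda>x. \<alpha> * x) ` code_space" for x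
  proof (rule ccontr)
    assume "x \<noteq> 0"
    obtain a b where "a \<in> code_polys" "b \<in> code_polys" "x = poly a lam" "x = \<alpha> * poly b lam"
      using x unfolding code_space_def by blast
    then have "(a, b) \<in> ratio_pairs l \<alpha>"
      using \<open>x \<noteq> 0\<close> unfolding ratio_pairs_def code_polys_def by auto
    then show False using assms unfolding is_ratio_def by blast
  qed
  moreover have "0 \<in> code_space \<inter> (\<lambda>x. \<alpha> * x) ` code_space"
    using subspace_code_space subspace_over_scaled[OF subspace_code_space]
    unfolding subspace_over_def by blast
  ultimately show ?thesis by blast
qed

lemma code_space_Int_scaled_ratio:
  assumes \<alpha>: "is_ratio \<alpha>"
  defines "H \<equiv> {h. poly_over L h \<and> degree h \<le> l - ratio_degree \<alpha> \<and>
    coeff h (l - ratio_degree \<alpha>) \<in> {c \<in> L. c * fst (lead_pair \<alpha>) \<in> F \<and> c * snd (lead_pair \<alpha>) \<in> F}}"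
  shows "code_space \<inter> (\<lambda>x. \<alpha> * x) ` code_space = (\<lambda>h. poly (min_num \<alpha> * h) lam) ` H"
proof -
  note D = ratio_degree_le_l[OF \<alpha>]
  have code_iff: "min_num \<alpha> * h \<in> code_polys \<and> min_den \<alpha> * h \<in> code_polys \<longleftrightarrow> h \<in> H"
    if h: "poly_over L h" "degree h \<le> l - ratio_degree \<alpha>" for h
  proof -
    have "degree (p * h) \<le> l" if "degree p \<le> ratio_degree \<alpha>" for p
      using degree_mult_le[of p h] h(2) D that by linarith
    then have "degree (min_num \<alpha> * h) \<le> l" "degree (min_den \<alpha> * h) \<le> l"
      using degree_min_num_le[OF \<alpha>] degree_min_den_le[OF \<alpha>] by blast+
    moreover have "poly_over L (min_num \<alpha> * h)" "poly_over L (min_den \<alpha> * h)"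
      using h(1) poly_over_mult[OF L] poly_over_min_num[OF \<alpha>] poly_over_min_den[OF \<alpha>] by blast+
    ultimately show ?thesis
      using coeff_mult_min_pair[OF \<alpha> D h(2)] h unfolding code_polys_def H_def poly_over_def
      by (auto simp: mult.commute)
  qed
  show ?thesis
  proof (intro equalityI subsetI)
    fix x assume "x \<in> code_space \<inter> (\<lambda>x. \<alpha> * x) ` code_space"
    then obtain a b where ab: "a \<in> code_polys" "b \<in> code_polys" "x = poly a lam" "x = \<alpha> * poly b lam"
      unfolding code_space_def by blast
    then obtain h where h: "poly_over L h" "a = min_num \<alpha> * h" "b = min_den \<alpha> * h"
        "degree h \<le> l - ratio_degree \<alpha>"
      using ratio_pair_factor[OF \<alpha>, of a b l] unfolding code_polys_def by auto
    then show "x \<in> (\<lambda>h. poly (min_num \<alpha> * h) lam) ` H"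
      using code_iff ab by blast
  next
    fix x assume "x \<in> (\<lambda>h. poly (min_num \<alpha> * h) lam) ` H"
    then obtain h where h: "h \<in> H" "x = poly (min_num \<alpha> * h) lam" by blast
    then have "min_num \<alpha> * h \<in> code_polys" "min_den \<alpha> * h \<in> code_polys"
      using code_iff unfolding H_def by blast+
    moreover have "x = \<alpha> * poly (min_den \<alpha> * h) lam" using h(2) poly_min_num[OF \<alpha>] by simp
    ultimately show "x \<in> code_space \<inter> (\<lambda>x. \<alpha> * x) ` code_space"
      using h(2) unfolding code_space_def by blast
  qed
qed

lemma card_code_space_Int_scaled: "card (code_space \<inter> (\<lambda>x. \<alpha> * x) ` code_space) = q ^ inter_dim \<alpha>"
proof (cases "is_ratio \<alpha>")
  case True
  define C where "C = {c \<in> L. c * fst (lead_pair \<alpha>) \<in> F \<and> c * snd (lead_pair \<alpha>) \<in> F}"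
  define H where "H = {h. poly_over L h \<and> degree h \<le> l - ratio_degree \<alpha> \<and> coeff h (l - ratio_degree \<alpha>) \<in> C}"
  have "inj_on (\<lambda>h. poly (min_num \<alpha> * h) lam) H"
  proof (rule inj_onI)
    fix h h' assume hh: "h \<in> H" "h' \<in> H" "poly (min_num \<alpha> * h) lam = poly (min_num \<alpha> * h') lam"
    have "degree (min_num \<alpha> * g) \<le> 2 * l" if "g \<in> H" for g
      using that degree_mult_le[of "min_num \<alpha>" g] degree_min_num_le[OF True] ratio_degree_le_l[OF True]
      unfolding H_def by auto
    then have "min_num \<alpha> * h = min_num \<alpha> * h'"
      using hh poly_over_mult[OF L poly_over_min_num[OF True]] unfolding H_def
      by (intro poly_eval_inj) auto
    then show "h = h'" using min_num_nonzero[OF True] by simp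
  qed
  moreover have "card H = card L ^ (l - ratio_degree \<alpha>) * card C"
    unfolding H_def by (rule card_poly_over_coeff_in[OF L]) (auto simp: C_def)
  moreover have "card C = q ^ of_bool (lead_pair \<alpha> \<in> F_rational_pairs)"
    unfolding C_def
    using card_scalars_into_F[of "fst (lead_pair \<alpha>)" "snd (lead_pair \<alpha>)"] lead_pair_in_nonzero_pairs[OF True]
    by simp
  ultimately show ?thesis
    using code_space_Int_scaled_ratio[OF True] True card_L
    unfolding inter_dim_def H_def C_def by (simp add: card_image power_mult power_add)
qed (simp add: code_space_Int_scaled_non_ratio inter_dim_def)

lemma subspace_dist_code_space:
  "subspace_dist F code_space ((\<lambda>x. \<alpha> * x) ` code_space) = 2 * (2 * l + 1) - 2 * inter_dim \<alpha>"
proof -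
  have "dim_over F (code_space \<inter> (\<lambda>x. \<alpha> * x) ` code_space) = inter_dim \<alpha>"
    using card_code_space_Int_scaled card_F
    by (intro dim_over_eqI_card[OF F] subspace_over_Int subspace_code_space
        subspace_over_scaled) simp_all
  then show ?thesis unfolding subspace_dist_def dim_code_space by simp
qed

lemma scaled_code_space_eq_iff:
  assumes "\<gamma> \<noteq> 0"
  shows "(\<lambda>x. \<gamma> * x) ` code_space = code_space \<longleftrightarrow> \<gamma> \<in> F"
proof
  assume "\<gamma> \<in> F"
  then have "(\<lambda>x. \<gamma> * x) ` code_space \<subseteq> code_space"
    using subspace_code_space unfolding subspace_over_def by auto
  moreover have "card ((\<lambda>x. \<gamma> * x) ` code_space) = card code_space"
    using assms by (simp add: card_image inj_on_def)
  ultimately show "(\<lambda>x. \<gamma> * x) ` code_space = code_space" by (simp add: card_subset_eq)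
next
  assume "(\<lambda>x. \<gamma> * x) ` code_space = code_space"
  then have "q ^ inter_dim \<gamma> = q ^ (2 * l + 1)"
    using card_code_space_Int_scaled[of \<gamma>] card_code_space by simp
  then have "inter_dim \<gamma> = 2 * l + 1" using q_ge_2 by (subst (asm) power_inject_exp) auto
  then have "is_ratio \<gamma>"
    and "2 * (l - ratio_degree \<gamma>) + of_bool (lead_pair \<gamma> \<in> F_rational_pairs) = 2 * l + 1"
    unfolding inter_dim_def by (auto split: if_splits)
  then have \<gamma>: "is_ratio \<gamma>" "ratio_degree \<gamma> = 0" "lead_pair \<gamma> \<in> F_rational_pairs"
    using ratio_degree_le_l[of \<gamma>] by (auto simp: of_bool_def split: if_splits)
  then have "degree (min_num \<gamma>) = 0" "degree (min_den \<gamma>) = 0"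
    using degree_min_num_le degree_min_den_le by (metis le_zero_eq)+
  then have "lead_pair \<gamma> = (poly (min_num \<gamma>) lam, poly (min_den \<gamma>) lam)"
    unfolding lead_pair_def \<gamma>(2) by (auto dest!: degree0_coeffs)
  moreover have "poly (min_num \<gamma>) lam = \<gamma> * poly (min_den \<gamma>) lam" "poly (min_den \<gamma>) lam \<noteq> 0"
    using poly_min_num poly_min_den_nonzero \<gamma>(1) by auto
  ultimately show "\<gamma> \<in> F" using \<gamma>(3) assms unfolding F_rational_pairs_def by auto
qed

lemma weight_code_space_count:
  assumes "i \<le> 2 * l + 1"
  shows "weight F code_space i * (q - 1) = card {\<alpha>. \<alpha> \<noteq> 0 \<and> inter_dim \<alpha> = 2 * l + 1 - i}"
proof -
  have le: "inter_dim \<alpha> \<le> 2 * l + 1" for \<alpha> unfolding inter_dim_def by auto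
  have "subspace_dist F code_space ((\<lambda>x. \<alpha> * x) ` code_space) = 2 * i \<longleftrightarrow> inter_dim \<alpha> = 2 * l + 1 - i"
    for \<alpha> unfolding subspace_dist_code_space using le[of \<alpha>] assms by (auto split: nat_diff_split)
  then show ?thesis
    using card_orb_filter_mult[OF scaled_code_space_eq_iff, of "\<lambda>V. subspace_dist F code_space V = 2 * i"]
      card_subfield_minus_zero[OF F] card_F
    unfolding weight_def by simp
qed

lemma inter_dim_eq_iff:
  assumes "d \<le> l" "0 < 2 * (l - d) + of_bool b"
  shows "inter_dim \<alpha> = 2 * (l - d) + of_bool b \<longleftrightarrow>
    is_ratio \<alpha> \<and> ratio_degree \<alpha> = d \<and> (lead_pair \<alpha> \<in> F_rational_pairs \<longleftrightarrow> b)"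
proof (cases "is_ratio \<alpha>")
  case True
  have "ratio_degree \<alpha> \<le> l" by (rule ratio_degree_le_l[OF True])
  then show ?thesis
    using True assms(1) unfolding inter_dim_def
    by (cases b; cases "lead_pair \<alpha> \<in> F_rational_pairs")
       (auto split: nat_diff_split simp: Suc_double_not_eq_double double_not_eq_Suc_double)
qed (use assms in \<open>auto simp: inter_dim_def\<close>)

lemma card_inter_dim_odd:
  assumes "d \<le> l"
  shows "card {\<alpha>. \<alpha> \<noteq> 0 \<and> inter_dim \<alpha> = 2 * (l - d) + 1} = ratio_count F_rational_pairs d"
proof -
  have "{\<alpha>. \<alpha> \<noteq> 0 \<and> inter_dim \<alpha> = 2 * (l - d) + 1}
      = {\<alpha>. is_ratio \<alpha> \<and> ratio_degree \<alpha> = d \<and> lead_pair \<alpha> \<in> F_rational_pairs}"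
    using inter_dim_eq_iff[OF assms, of True] is_ratio_nonzero by auto
  then show ?thesis unfolding ratio_count_def by simp
qed

lemma card_inter_dim_even:
  assumes "d < l"
  shows "card {\<alpha>. \<alpha> \<noteq> 0 \<and> inter_dim \<alpha> = 2 * (l - d)} + ratio_count F_rational_pairs d
    = ratio_count nonzero_pairs d"
proof -
  have "{\<alpha>. \<alpha> \<noteq> 0 \<and> inter_dim \<alpha> = 2 * (l - d)}
      = {\<alpha>. is_ratio \<alpha> \<and> ratio_degree \<alpha> = d \<and> lead_pair \<alpha> \<notin> F_rational_pairs}"
    using inter_dim_eq_iff[of d False] assms is_ratio_nonzero by auto
  moreover have "{\<alpha>. is_ratio \<alpha> \<and> ratio_degree \<alpha> = d}
      = {\<alpha>. is_ratio \<alpha> \<and> ratio_degree \<alpha> = d \<and> lead_pair \<alpha> \<notin> F_rational_pairs}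
      \<union> {\<alpha>. is_ratio \<alpha> \<and> ratio_degree \<alpha> = d \<and> lead_pair \<alpha> \<in> F_rational_pairs}" by auto
  ultimately show ?thesis
    unfolding ratio_count_nonzero_pairs by (simp add: ratio_count_def, subst card_Un_disjoint) auto
qed

lemma card_inter_dim_zero:
  "card {\<alpha>. \<alpha> \<noteq> 0 \<and> inter_dim \<alpha> = 0} + card {\<alpha>. is_ratio \<alpha> \<and> ratio_degree \<alpha> < l}
    + ratio_count F_rational_pairs l = card (UNIV :: 'a set) - 1"
proof -
  define A where "A = {\<alpha>. \<alpha> \<noteq> 0 \<and> inter_dim \<alpha> = 0}"
  define B where "B = {\<alpha>. is_ratio \<alpha> \<and> ratio_degree \<alpha> < l}"
  define C where "C = {\<alpha>. is_ratio \<alpha> \<and> ratio_degree \<alpha> = l \<and> lead_pair \<alpha> \<in> F_rational_pairs}"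
  have "inter_dim \<alpha> = 0 \<longleftrightarrow> \<not> is_ratio \<alpha> \<or> (ratio_degree \<alpha> = l \<and> lead_pair \<alpha> \<notin> F_rational_pairs)" for \<alpha>
    using ratio_degree_le_l[of \<alpha>] l_pos unfolding inter_dim_def by auto
  then have "UNIV - {0} = A \<union> B \<union> C"
    unfolding A_def B_def C_def using is_ratio_nonzero ratio_degree_le_l by (auto simp: le_less)
  moreover have "card (A \<union> B) = card A + card B"
    by (rule card_Un_disjoint) (auto simp: A_def B_def inter_dim_def)
  moreover have "card (A \<union> B \<union> C) = card (A \<union> B) + card C"
    by (rule card_Un_disjoint) (auto simp: A_def B_def C_def inter_dim_def)
  ultimately have "card (UNIV - {0 :: 'a}) = card A + card B + card C" by simp
  then show ?thesis unfolding A_def B_def C_def ratio_count_def by simp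
qed

lemma card_L_power: "int (card L) ^ (2 * Suc j - 1) = int q ^ (4 * j + 2)"
proof -
  have "int (card L) ^ (2 * Suc j - 1) = (int q ^ 2) ^ (2 * j + 1)" using card_L by simp
  also have "\<dots> = int q ^ (4 * j + 2)" by (simp only: power_mult[symmetric]) simp
  finally show ?thesis .
qed

lemma ratio_count_F_rational_pairs_0: "int (ratio_count F_rational_pairs 0) = int q - 1"
  using ratio_count_formula(1)[OF scaling_class_F_rational_pairs card_F_rational_pairs] by simp

lemma ratio_count_nonzero_pairs_0: "int (ratio_count nonzero_pairs 0) = int q ^ 2 - 1"
  using ratio_count_formula(1)[OF scaling_class_nonzero_pairs card_nonzero_pairs] card_L by simp

lemma ratio_count_F_rational_pairs_Suc:
  "Suc j \<le> l \<Longrightarrow> int (ratio_count F_rational_pairs (Suc j)) = (int q + 1) * int q ^ (4 * j + 2) * (int q ^ 2 - 1)"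
  using ratio_count_formula(2)[OF scaling_class_F_rational_pairs card_F_rational_pairs, of "Suc j"]
  unfolding card_L_power by (simp add: card_L)

lemma ratio_count_nonzero_pairs_Suc:
  "Suc j \<le> l \<Longrightarrow> int (ratio_count nonzero_pairs (Suc j)) = (int q ^ 2 + 1) * int q ^ (4 * j + 2) * (int q ^ 2 - 1)"
  using ratio_count_formula(2)[OF scaling_class_nonzero_pairs card_nonzero_pairs, of "Suc j"]
  unfolding card_L_power by (simp add: card_L)

lemma weight_code_space_count_int:
  assumes "i \<le> 2 * l + 1"
  shows "int (weight F code_space i) * (int q - 1) = int (card {\<alpha>. \<alpha> \<noteq> 0 \<and> inter_dim \<alpha> = 2 * l + 1 - i})"
  using arg_cong[OF weight_code_space_count[OF assms], of int] q_ge_2 by (simp add: of_nat_diff)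

lemma weight_code_space_1: "weight F code_space 1 = q"
proof -
  have idx: "2 * l + 1 - 1 = 2 * (l - 0)" by simp
  have "int (weight F code_space 1) * (int q - 1) + (int q - 1) = int q ^ 2 - 1"
    using weight_code_space_count_int[of 1] arg_cong[OF card_inter_dim_even[of 0], of int] l_pos
      ratio_count_F_rational_pairs_0 ratio_count_nonzero_pairs_0 unfolding idx by simp
  then have "(int (weight F code_space 1) - int q) * (int q - 1) = 0"
    by (simp add: algebra_simps power2_eq_square)
  then show ?thesis using q_ge_2 by simp
qed

lemma weight_code_space_odd:
  assumes "1 \<le> r" "r < l"
  shows "weight F code_space (2 * r + 1) = q ^ (4 * r - 1) * (q ^ 2 - 1)"
proof -
  obtain j where r: "r = Suc j" using assms(1) by (cases r) auto
  define X where "X = int q ^ (4 * j + 2)"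
  have idx: "2 * l + 1 - (2 * r + 1) = 2 * (l - r)" by simp
  have "int (weight F code_space (2 * r + 1)) * (int q - 1) + int (ratio_count F_rational_pairs r)
      = int (ratio_count nonzero_pairs r)"
    using weight_code_space_count_int[of "2 * r + 1"] arg_cong[OF card_inter_dim_even[of r], of int] assms
    unfolding idx by simp
  then have "int (weight F code_space (2 * r + 1)) * (int q - 1) + (int q + 1) * X * (int q ^ 2 - 1)
      = (int q ^ 2 + 1) * X * (int q ^ 2 - 1)"
    using ratio_count_F_rational_pairs_Suc[of j] ratio_count_nonzero_pairs_Suc[of j] assms
    unfolding X_def r by simp
  then have "(int (weight F code_space (2 * r + 1)) - int q * X * (int q ^ 2 - 1)) * (int q - 1) = 0"
    by (simp add: algebra_simps power2_eq_square)
  then have "int (weight F code_space (2 * r + 1)) = int q * X * (int q ^ 2 - 1)"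
    using q_ge_2 by simp
  also have "\<dots> = int (q ^ (4 * r - 1) * (q ^ 2 - 1))"
    using q_ge_2 unfolding X_def r by (simp add: of_nat_diff power_add power3_eq_cube algebra_simps)
  finally show ?thesis by (simp only: of_nat_eq_iff)
qed

lemma weight_code_space_even:
  assumes "1 \<le> r" "r \<le> l"
  shows "weight F code_space (2 * r) = q ^ (4 * r - 2) * (q + 1) ^ 2"
proof -
  obtain j where r: "r = Suc j" using assms(1) by (cases r) auto
  define X where "X = int q ^ (4 * j + 2)"
  have idx: "2 * l + 1 - 2 * r = 2 * (l - r) + 1" using assms by simp
  have "int (weight F code_space (2 * r)) * (int q - 1) = int (ratio_count F_rational_pairs r)"
    using weight_code_space_count_int[of "2 * r"] card_inter_dim_odd[of r] assms unfolding idx by simp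
  then have "int (weight F code_space (2 * r)) * (int q - 1) = (int q + 1) * X * (int q ^ 2 - 1)"
    using ratio_count_F_rational_pairs_Suc[of j] assms unfolding X_def r by simp
  then have "(int (weight F code_space (2 * r)) - X * (int q + 1) ^ 2) * (int q - 1) = 0"
    by (simp add: algebra_simps power2_eq_square)
  then have "int (weight F code_space (2 * r)) = X * (int q + 1) ^ 2"
    using q_ge_2 by simp
  also have "\<dots> = int (q ^ (4 * r - 2) * (q + 1) ^ 2)"
    unfolding X_def r by simp
  finally show ?thesis by (simp only: of_nat_eq_iff)
qed

lemma weight_code_space_top:
  "real (weight F code_space (2 * l + 1)) = (real (card (UNIV :: 'a set)) - 1) / (real q - 1) - (real q + 1)
    - (real q + 1) * real q ^ 2 *
      ((real q ^ (4 * l - 3) - real q) * (real q - 1) + (real q + 1) * (real q ^ (4 * l) - 1))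
      / (real q ^ 4 - 1)"
proof -
  obtain m where m: "l = Suc m" using l_pos by (cases l) auto
  define x where "x = int q ^ (4 * m)"
  have "card (UNIV :: 'a set) \<ge> 1" by (simp add: Suc_le_eq card_gt_0_iff)
  moreover have "int (card L) ^ (2 * l - 1) = int q ^ 2 * x" "int q ^ (4 * m + 2) = int q ^ 2 * x"
    using card_L_power[of m] unfolding m x_def by (simp_all add: power_add power2_eq_square)
  ultimately have "int (weight F code_space (2 * l + 1)) * (int q - 1)
      = int (card (UNIV :: 'a set)) - 1 - (int q ^ 2 * x - 1) - (int q + 1) * (int q ^ 2 * x) * (int q ^ 2 - 1)"
    using weight_code_space_count_int[of "2 * l + 1"] arg_cong[OF card_inter_dim_zero, of int]
      card_ratio_degree_less[OF l_pos order_refl] ratio_count_F_rational_pairs_Suc[of m] m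
    by (simp add: of_nat_diff)
  from arg_cong[OF this, of real_of_int]
  have "real (weight F code_space (2 * l + 1)) * (real q - 1)
      = real (card (UNIV :: 'a set)) - 1 - (real q ^ 2 * real_of_int x - 1)
        - (real q + 1) * (real q ^ 2 * real_of_int x) * (real q ^ 2 - 1)"
    by simp
  from top_weight_identity[OF _ this] q_ge_2
  have "real (weight F code_space (2 * l + 1)) = (real (card (UNIV :: 'a set)) - 1) / (real q - 1) - (real q + 1)
    - (real q + 1) * real q ^ 2 * ((real q * real_of_int x - real q) * (real q - 1)
        + (real q + 1) * (real q ^ 4 * real_of_int x - 1)) / (real q ^ 4 - 1)"
    by simp
  moreover have "real q ^ (4 * l - 3) = real q * real_of_int x" "real q ^ (4 * l) = real q ^ 4 * real_of_int x"
    unfolding x_def m by (simp_all add: power_add)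
  ultimately show ?thesis by simp
qed

end

theorem theorem2p4:
  fixes q n l :: nat and K K2 :: "'a::{field,finite} set" and lam :: 'a
  assumes "\<exists>p k. prime p \<and> k > 0 \<and> q = p ^ k"
    and "n > 0" and "even n"
    and "card (UNIV :: 'a set) = q ^ n"
    and "subfield_of K" and "card K = q"
    and "subfield_of K2" and "card K2 = q ^ 2" and "K \<subseteq> K2"
    and "lam \<notin> K2"
    and "1 \<le> l" and "2 * l < dim_over K2 (adjoin K2 lam)"
  defines "S \<equiv> {(\<Sum>j<l. c j * lam ^ j) + a * lam ^ l | c a. (\<forall>j<l. c j \<in> K2) \<and> a \<in> K}"
  shows "dim_over K S = 2 * l + 1
    \<and> weight K S 1 = q
    \<and> (\<forall>r\<in>{1..l-1}. weight K S (2 * r + 1) = q ^ (4 * r - 1) * (q ^ 2 - 1))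
    \<and> (\<forall>r\<in>{1..l}. weight K S (2 * r) = q ^ (4 * r - 2) * (q + 1) ^ 2)
    \<and> real (weight K S (2 * l + 1)) =
        (real q ^ n - 1) / (real q - 1) - (real q + 1)
        - (real q + 1) * real q ^ 2 *
          ((real q ^ (4 * l - 3) - real q) * (real q - 1) + (real q + 1) * (real q ^ (4 * l) - 1))
          / (real q ^ 4 - 1)"
proof -
  interpret orbit_code K2 lam l K q
    by unfold_locales (use assms in auto)
  have S: "S = code_space" unfolding S_def code_space_eq ..
  have "\<forall>r\<in>{1..l-1}. weight K S (2 * r + 1) = q ^ (4 * r - 1) * (q ^ 2 - 1)"
    unfolding S using weight_code_space_odd by force
  moreover have "\<forall>r\<in>{1..l}. weight K S (2 * r) = q ^ (4 * r - 2) * (q + 1) ^ 2"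
    unfolding S using weight_code_space_even by force
  moreover have "real (card (UNIV :: 'a set)) = real q ^ n" using assms(4) by simp
  ultimately show ?thesis
    unfolding S using dim_code_space weight_code_space_1 weight_code_space_top by simp
qed

end
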